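(* Let $\Gamma$ be a finite connected tetravalent $G$-half-arc-transitive graph for some $G\le\mathrm{Aut}(\Gamma)$ with $\mathrm{rad}_G(\Gamma)=3$ and $\mathrm{att}_G(\Gamma)=2$, and let $\Lambda=\mathrm{Alt}_G(\Gamma)$. Then the group $G$ induces an action on $\Lambda$ which is transitive on the $2$-arcs of $\Lambda$, and $\mathrm{Dart}(\Lambda)\cong\Gamma$. In fact, there is an isomorphism $\Psi\colon\mathrm{Dart}(\Lambda)\to\Gamma$ mapping the natural orientation of $\mathrm{Dart}(\Lambda)$ to one of the two $G$-induced orientations of $\Gamma$.
   Context: All graphs are finite and simple. For a tetravalent graph $\Gamma$ and $G\le \mathrm{Aut}(\Gamma)$, $\Gamma$ is $G$-half-arc-transitive if $G$ acts transitively on vertices and edges but not on arcs; then the two $G$-orbits on arcs give two paired ($G$-induced) orientations of the edges, and each vertex is the tail of two and head of two incident edges. A $G$-alternating cycle is a cycle in which every two consecutive edges have a common head or a common tail. All have length $2\,\mathrm{rad}_G(\Gamma)$, and any two sharing a vertex meet in $\mathrm{att}_G(\Gamma)$ vertices. $\mathrm{Alt}_G(\Gamma)$ is the graph whose vertices are the $G$-alternating cycles, two adjacent iff they share a vertex; $G$ acts on it naturally. A $2$-arc is a walk $(x,y,z)$ with $x\ne z$. For a cubic graph $\Lambda$, $\mathrm{Dart}(\Lambda)$ has as vertices the arcs of $\Lambda$, with $(u,v)$ adjacent to $(u',v')$ iff either $u'=v$ and $u\neq v'$, or $u=v'$ and $u'\neq v$; its natural orientation orients the edge $(u,v)(v,w)$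 from $(u,v)$ to $(v,w)$. *)

theory Defs
  imports "HOL-Algebra.Bij"
begin

definition simple_graph :: "'a set \<Rightarrow> ('a \<Rightarrow> 'a \<Rightarrow> bool) \<Rightarrow> bool" where
  "simple_graph V E \<longleftrightarrow> finite V \<and> (\<forall>x y. E x y \<longrightarrow> x \<in> V \<and> y \<in> V \<and> x \<noteq> y \<and> E y x)"

definition connected_graph :: "'a set \<Rightarrow> ('a \<Rightarrow> 'a \<Rightarrow> bool) \<Rightarrow> bool" where
  "connected_graph V E \<longleftrightarrow> (\<forall>u\<in>V. \<forall>v\<in>V. E\<^sup>*\<^sup>* u v)"

definition tetravalent :: "'a set \<Rightarrow> ('a \<Rightarrow> 'a \<Rightarrow> bool) \<Rightarrow> bool" where
  "tetravalent V E \<longleftrightarrow> (\<forall>v\<in>V. card {u. E v u} = 4)"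

definition graph_edges :: "('a \<Rightarrow> 'a \<Rightarrow> bool) \<Rightarrow> 'a set set" where
  "graph_edges E = {{u, v} | u v. E u v}"

definition graph_arcs :: "('a \<Rightarrow> 'a \<Rightarrow> bool) \<Rightarrow> ('a \<times> 'a) set" where
  "graph_arcs E = {(u, v). E u v}"

text \<open>G is a subgroup of Aut(V,E); permutations are represented as elements of BijGroup V
  (bijections of V, extensional outside V).\<close>
definition aut_subgroup :: "('a \<Rightarrow> 'a) set \<Rightarrow> 'a set \<Rightarrow> ('a \<Rightarrow> 'a \<Rightarrow> bool) \<Rightarrow> bool" where
  "aut_subgroup G V E \<longleftrightarrow> subgroup G (BijGroup V) \<and>
     (\<forall>g\<in>G. \<forall>x\<in>V. \<forall>y\<in>V. E x y \<longleftrightarrow> E (g x) (g y))"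

definition half_arc_transitive :: "('a \<Rightarrow> 'a) set \<Rightarrow> 'a set \<Rightarrow> ('a \<Rightarrow> 'a \<Rightarrow> bool) \<Rightarrow> bool" where
  "half_arc_transitive G V E \<longleftrightarrow>
     (\<forall>u\<in>V. \<forall>v\<in>V. \<exists>g\<in>G. g u = v) \<and>
     (\<forall>e\<in>graph_edges E. \<forall>f\<in>graph_edges E. \<exists>g\<in>G. g ` e = f) \<and>
     \<not> (\<forall>a\<in>graph_arcs E. \<forall>b\<in>graph_arcs E. \<exists>g\<in>G. g (fst a) = fst b \<and> g (snd a) = snd b)"

text \<open>The G-orbit of an arc; the G-induced orientations are the G-orbits on arcs.
  An arc (u,v) in an orientation O means the edge is oriented from tail u to head v.\<close>
definition arc_orbit :: "('a \<Rightarrow> 'a) set \<Rightarrow> 'a \<times> 'a \<Rightarrow> ('a \<times> 'a) set" where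
  "arc_orbit G a = {(g (fst a), g (snd a)) | g. g \<in> G}"

definition G_orientation :: "('a \<Rightarrow> 'a) set \<Rightarrow> 'a set \<Rightarrow> ('a \<Rightarrow> 'a \<Rightarrow> bool) \<Rightarrow> ('a \<times> 'a) set \<Rightarrow> bool" where
  "G_orientation G V E Ori \<longleftrightarrow> (\<exists>a\<in>graph_arcs E. Ori = arc_orbit G a)"

text \<open>A fixed one of the two G-induced orientations (alternating cycles do not depend on the choice).\<close>
definition some_orientation :: "('a \<Rightarrow> 'a) set \<Rightarrow> ('a \<Rightarrow> 'a \<Rightarrow> bool) \<Rightarrow> ('a \<times> 'a) set" where
  "some_orientation G E = arc_orbit G (SOME a. a \<in> graph_arcs E)"

definition is_cycle :: "'a set \<Rightarrow> ('a \<Rightarrow> 'a \<Rightarrow> bool) \<Rightarrow> 'a list \<Rightarrow> bool" where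
  "is_cycle V E xs \<longleftrightarrow> distinct xs \<and> length xs \<ge> 3 \<and> set xs \<subseteq> V \<and>
     (\<forall>i < length xs. E (xs ! i) (xs ! ((i + 1) mod length xs)))"

definition cycle_edges :: "'a list \<Rightarrow> 'a set set" where
  "cycle_edges xs = {{xs ! i, xs ! ((i + 1) mod length xs)} | i. i < length xs}"

definition alternating :: "('a \<times> 'a) set \<Rightarrow> 'a list \<Rightarrow> bool" where
  "alternating Ori xs \<longleftrightarrow> (let n = length xs in \<forall>i < n.
     let a = xs ! i; b = xs ! ((i + 1) mod n); c = xs ! ((i + 2) mod n) in
       ((a, b) \<in> Ori \<and> (c, b) \<in> Ori) \<or> ((b, a) \<in> Ori \<and> (b, c) \<in> Ori))"

text \<open>The G-alternating cycles, each identified with its edge set.\<close>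
definition alt_cycles :: "('a \<Rightarrow> 'a) set \<Rightarrow> 'a set \<Rightarrow> ('a \<Rightarrow> 'a \<Rightarrow> bool) \<Rightarrow> 'a set set set" where
  "alt_cycles G V E = {cycle_edges xs | xs. is_cycle V E xs \<and> alternating (some_orientation G E) xs}"

definition cycle_vertices :: "'a set set \<Rightarrow> 'a set" where
  "cycle_vertices C = \<Union> C"

definition has_radius :: "('a \<Rightarrow> 'a) set \<Rightarrow> 'a set \<Rightarrow> ('a \<Rightarrow> 'a \<Rightarrow> bool) \<Rightarrow> nat \<Rightarrow> bool" where
  "has_radius G V E r \<longleftrightarrow> (\<forall>C\<in>alt_cycles G V E. card C = 2 * r)"

definition has_attachment :: "('a \<Rightarrow> 'a) set \<Rightarrow> 'a set \<Rightarrow> ('a \<Rightarrow> 'a \<Rightarrow> bool) \<Rightarrow> nat \<Rightarrow> bool" where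
  "has_attachment G V E a \<longleftrightarrow> (\<forall>C\<in>alt_cycles G V E. \<forall>D\<in>alt_cycles G V E.
     C \<noteq> D \<and> cycle_vertices C \<inter> cycle_vertices D \<noteq> {} \<longrightarrow>
       card (cycle_vertices C \<inter> cycle_vertices D) = a)"

definition alt_adj :: "('a \<Rightarrow> 'a) set \<Rightarrow> 'a set \<Rightarrow> ('a \<Rightarrow> 'a \<Rightarrow> bool) \<Rightarrow> 'a set set \<Rightarrow> 'a set set \<Rightarrow> bool" where
  "alt_adj G V E C D \<longleftrightarrow> C \<in> alt_cycles G V E \<and> D \<in> alt_cycles G V E \<and> C \<noteq> D \<and>
     cycle_vertices C \<inter> cycle_vertices D \<noteq> {}"

definition cyc_act :: "('a \<Rightarrow> 'a) \<Rightarrow> 'a set set \<Rightarrow> 'a set set" where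
  "cyc_act g C = (\<lambda>e. g ` e) ` C"

definition two_arc :: "('b \<Rightarrow> 'b \<Rightarrow> bool) \<Rightarrow> 'b \<Rightarrow> 'b \<Rightarrow> 'b \<Rightarrow> bool" where
  "two_arc R x y z \<longleftrightarrow> R x y \<and> R y z \<and> x \<noteq> z"

definition dart_adj :: "('b \<Rightarrow> 'b \<Rightarrow> bool) \<Rightarrow> 'b \<times> 'b \<Rightarrow> 'b \<times> 'b \<Rightarrow> bool" where
  "dart_adj R x y \<longleftrightarrow> R (fst x) (snd x) \<and> R (fst y) (snd y) \<and>
     ((fst y = snd x \<and> fst x \<noteq> snd y) \<or> (fst x = snd y \<and> fst y \<noteq> snd x))"

definition dart_oriented :: "('b \<Rightarrow> 'b \<Rightarrow> bool) \<Rightarrow> 'b \<times> 'b \<Rightarrow> 'b \<times> 'b \<Rightarrow> bool" where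
  "dart_oriented R x y \<longleftrightarrow> R (fst x) (snd x) \<and> R (fst y) (snd y) \<and>
     fst y = snd x \<and> fst x \<noteq> snd y"

end

theory Submission
  imports Defs
begin

text \<open>Orient the graph by one of the two G-orbits on arcs; then every vertex has in- and
  out-degree 2. Starting from an arc (u_0, w_0) and switching alternately to the other arc at the
  head and at the tail traces the alternating cycle u_0 -> w_0 <- u_1 -> w_1 <- ... . Since G is
  transitive on arcs of the orientation, it rotates and reflects this cycle; hence no vertex is both
  a tail and a head on it, and the cycle has length twice its period, so the radius 3 makes the
  period 3. Every vertex v therefore lies on exactly two alternating cycles: its in-cycle, where it
  is a head, and its out-cycle, where it is a tail. Attachment number 2 forces the in-cycle of u_k
  to be the out-cycle of w_(k+1), and this yields that (x, y) is an arc exactly when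
  in(y) = out(x) and in(x) \<noteq> out(y). So v \<mapsto> (in(v), out(v)) is a bijection from the vertices
  onto the arcs of Alt_G, carrying the natural orientation of the Dart graph to the G-orientation,
  and transitivity of G on oriented arcs becomes transitivity on 2-arcs of Alt_G.\<close>

lemma card_cycle_edges:
  assumes "distinct xs" "length xs \<ge> 3"
  shows "card (cycle_edges xs) = length xs"
proof -
  define n where "n = length xs"
  define f where "f i = {xs ! i, xs ! ((i + 1) mod n)}" for i
  have n3: "n \<ge> 3" using assms n_def by simp
  have succ_mod: "(i + 1) mod n = (if i + 1 < n then i + 1 else 0)" if "i < n" for i
    using that by (cases "i + 1 = n") auto
  have nth_inj: "a < n \<Longrightarrow> b < n \<Longrightarrow> xs ! a = xs ! b \<Longrightarrow> a = b" for a b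
    using assms(1) n_def nth_eq_iff_index_eq by blast
  have "inj_on f {..<n}"
  proof (rule inj_onI)
    fix i j assume ij: "i \<in> {..<n}" "j \<in> {..<n}" "f i = f j"
    have lt: "(i + 1) mod n < n" "(j + 1) mod n < n" using n3 by auto
    from ij(3) consider "xs ! i = xs ! j" | "xs ! i = xs ! ((j + 1) mod n)" "xs ! ((i + 1) mod n) = xs ! j"
      unfolding f_def by (auto simp: doubleton_eq_iff)
    then show "i = j"
    proof cases
      case 1 then show ?thesis using nth_inj ij by simp
    next
      case 2
      then have "i = (j + 1) mod n" "(i + 1) mod n = j" using nth_inj ij lt by simp_all
      then show ?thesis using n3 ij succ_mod by (simp split: if_splits)
    qed
  qed
  moreover have "cycle_edges xs = f ` {..<n}" by (auto simp: cycle_edges_def f_def n_def)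
  ultimately show ?thesis using n_def by (simp add: card_image)
qed

definition int_cycle_edges :: "(int \<Rightarrow> 'a) \<Rightarrow> 'a set set" where
  "int_cycle_edges f = {{f p, f (p + 1)} | p. True}"

lemma int_cycle_edges_shift:
  assumes "\<And>p. g p = f (p + c)"
  shows "int_cycle_edges g = int_cycle_edges f"
proof (rule equalityI; rule subsetI)
  fix e assume "e \<in> int_cycle_edges g"
  then obtain p where "e = {g p, g (p + 1)}" by (auto simp: int_cycle_edges_def)
  then have "e = {f (p + c), f ((p + c) + 1)}" using assms by (simp add: algebra_simps)
  then show "e \<in> int_cycle_edges f" by (auto simp: int_cycle_edges_def)
next
  fix e assume "e \<in> int_cycle_edges f"
  then obtain p where "e = {f p, f (p + 1)}" by (auto simp: int_cycle_edges_def)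
  then have "e = {g (p - c), g ((p - c) + 1)}" using assms by (simp add: algebra_simps)
  then show "e \<in> int_cycle_edges g" by (auto simp: int_cycle_edges_def)
qed

lemma int_cycle_edges_reflect:
  assumes "\<And>p. g p = f (c - p)"
  shows "int_cycle_edges g = int_cycle_edges f"
proof (rule equalityI; rule subsetI)
  fix e assume "e \<in> int_cycle_edges g"
  then obtain p where "e = {g p, g (p + 1)}" by (auto simp: int_cycle_edges_def)
  then have "e = {f (c - p - 1), f ((c - p - 1) + 1)}" using assms by (auto simp: algebra_simps)
  then show "e \<in> int_cycle_edges f" by (auto simp: int_cycle_edges_def)
next
  fix e assume "e \<in> int_cycle_edges f"
  then obtain p where "e = {f p, f (p + 1)}" by (auto simp: int_cycle_edges_def)
  then have "e = {g (c - p - 1), g ((c - p - 1) + 1)}" using assms by (auto simp: algebra_simps)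
  then show "e \<in> int_cycle_edges g" by (auto simp: int_cycle_edges_def)
qed

lemma cycle_vertices_int_cycle_edges: "cycle_vertices (int_cycle_edges f) = range f"
  by (auto simp: cycle_vertices_def int_cycle_edges_def)

lemma cyc_act_int_cycle_edges: "cyc_act g (int_cycle_edges f) = int_cycle_edges (g \<circ> f)"
  by (auto simp: cyc_act_def int_cycle_edges_def image_iff) blast

lemma cycle_edges_eq_int_cycle_edges:
  assumes "xs \<noteq> []" and "\<And>p. f p = xs ! nat ((p + c) mod int (length xs))"
  shows "cycle_edges xs = int_cycle_edges f"
proof -
  define n where "n = length xs"
  have n: "n > 0" using assms(1) n_def by simp
  have f_nat: "f (int i - c) = xs ! (i mod n)" for i
    using assms(2)[of "int i - c"] n_def by (simp add: nat_mod_as_int)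
  show ?thesis
  proof (rule equalityI; rule subsetI)
    fix e assume "e \<in> cycle_edges xs"
    then obtain i where "i < n" "e = {xs ! i, xs ! ((i + 1) mod n)}"
      by (auto simp: cycle_edges_def n_def)
    then have "e = {f (int i - c), f ((int i - c) + 1)}"
      using f_nat[of i] f_nat[of "i + 1"] by (simp add: algebra_simps)
    then show "e \<in> int_cycle_edges f" by (auto simp: int_cycle_edges_def)
  next
    fix e assume "e \<in> int_cycle_edges f"
    then obtain p where p: "e = {f p, f (p + 1)}" by (auto simp: int_cycle_edges_def)
    define i where "i = nat ((p + c) mod int n)"
    have i_mod: "int i = (p + c) mod int n" using n by (simp add: i_def)
    have i: "i < n" "p = int i - c + int n * ((p + c) div int n)"
      using n i_mod div_mult_mod_eq[of "p + c" "int n"] by (simp_all add: i_def nat_less_iff algebra_simps)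
    have per: "f (q + int n * k) = f q" for q k
    proof -
      have "(q + int n * k + c) mod int n = (q + c) mod int n"
        by (metis add.commute add.left_commute mod_mult_self2)
      then show ?thesis using assms(2) n_def by simp
    qed
    have "f p = xs ! i" "f (p + 1) = xs ! ((i + 1) mod n)"
      using per[of "int i - c" "(p + c) div int n"] per[of "int i - c + 1" "(p + c) div int n"]
        f_nat[of i] f_nat[of "i + 1"] i by (simp_all add: algebra_simps)
    then show "e \<in> cycle_edges xs" using p i(1) by (auto simp: cycle_edges_def n_def)
  qed
qed

lemma card_2_cases: "card S = 2 \<Longrightarrow> x \<in> S \<Longrightarrow> y \<in> S \<Longrightarrow> z \<in> S \<Longrightarrow> x \<noteq> y \<Longrightarrow> z = x \<or> z = y"
  by (auto simp: card_2_iff)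

lemma mod_double_plus_one: "0 < m \<Longrightarrow> (2 * a + 1) mod (2 * m) = 2 * (a mod m) + 1" for a m :: int
proof -
  assume m: "0 < m"
  have "(2 * a + 1) mod (2 * m) = (2 * (a mod m) + 1) mod (2 * m)"
    by (metis mod_add_left_eq mod_mult_mult1)
  also have "\<dots> = 2 * (a mod m) + 1"
  proof (rule mod_pos_pos_trivial)
    have "0 \<le> a mod m" "a mod m < m" using m by simp_all
    then show "0 \<le> 2 * (a mod m) + 1" "2 * (a mod m) + 1 < 2 * m" by linarith+
  qed
  finally show ?thesis .
qed

lemma mod_add_2_neq_nat: "2 < n \<Longrightarrow> (a + 2) mod n \<noteq> a mod n" for a n :: nat
proof
  assume "2 < n" "(a + 2) mod n = a mod n"
  then have "n dvd 2" using mod_eq_dvd_iff_nat[of a "a + 2" n] by simp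
  then show False using \<open>2 < n\<close> by (simp add: dvd_imp_le leD)
qed

lemma mod_add_2_neq_int: "2 < m \<Longrightarrow> (a + 2) mod m \<noteq> a mod m" for a m :: int
proof
  assume "2 < m" "(a + 2) mod m = a mod m"
  then have "m dvd 2" using mod_eq_dvd_iff[of "a + 2" m a] by simp
  then show False using \<open>2 < m\<close> zdvd_imp_le by fastforce
qed

section \<open>The G-induced orientation\<close>

locale half_arc_transitive_graph =
  fixes V :: "'a set" and E :: "'a \<Rightarrow> 'a \<Rightarrow> bool" and G :: "('a \<Rightarrow> 'a) set"
  assumes simple: "simple_graph V E" and tetravalent: "tetravalent V E"
    and aut: "aut_subgroup G V E" and half_arc_trans: "half_arc_transitive G V E"
begin

lemma finite_V: "finite V"
  using simple by (simp add: simple_graph_def)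

lemma adjD: "E x y \<Longrightarrow> x \<in> V \<and> y \<in> V \<and> x \<noteq> y \<and> E y x"
  using simple by (simp add: simple_graph_def)

lemma G_subgroup: "subgroup G (BijGroup V)"
  using aut by (simp add: aut_subgroup_def)

lemma G_Bij: "g \<in> G \<Longrightarrow> g \<in> Bij V"
  using subgroup.subset[OF G_subgroup] by (auto simp: BijGroup_def)

lemma G_bij_betw: "g \<in> G \<Longrightarrow> bij_betw g V V"
  using G_Bij by (simp add: Bij_def)

lemma G_mem_V: "g \<in> G \<Longrightarrow> x \<in> V \<Longrightarrow> g x \<in> V"
  using G_bij_betw bij_betwE by blast

lemma G_inj: "g \<in> G \<Longrightarrow> x \<in> V \<Longrightarrow> y \<in> V \<Longrightarrow> g x = g y \<Longrightarrow> x = y"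
  using G_bij_betw by (metis bij_betw_imp_inj_on inj_onD)

lemma G_adj: "g \<in> G \<Longrightarrow> E x y \<Longrightarrow> E (g x) (g y)"
  using aut adjD unfolding aut_subgroup_def by blast

lemma G_comp: assumes "g \<in> G" "h \<in> G" obtains k where "k \<in> G" "\<And>x. x \<in> V \<Longrightarrow> k x = g (h x)"
proof
  show "g \<otimes>\<^bsub>BijGroup V\<^esub> h \<in> G" using subgroup.m_closed[OF G_subgroup] assms by blast
  show "(g \<otimes>\<^bsub>BijGroup V\<^esub> h) x = g (h x)" if "x \<in> V" for x
    using G_Bij[OF assms(1)] G_Bij[OF assms(2)] that by (simp add: BijGroup_def compose_def)
qed

lemma G_inverse: assumes "g \<in> G" obtains k where "k \<in> G" "\<And>x. x \<in> V \<Longrightarrow> k (g x) = x"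
proof
  show "inv\<^bsub>BijGroup V\<^esub> g \<in> G" using subgroup.m_inv_closed[OF G_subgroup] assms by blast
  show "(inv\<^bsub>BijGroup V\<^esub> g) (g x) = x" if "x \<in> V" for x
    using G_Bij[OF assms] G_mem_V[OF assms that] G_bij_betw[OF assms] that
    by (simp add: inv_BijGroup bij_betw_inv_into_left)
qed

lemma G_vertex_transitive: "u \<in> V \<Longrightarrow> v \<in> V \<Longrightarrow> \<exists>g\<in>G. g u = v"
  using half_arc_trans unfolding half_arc_transitive_def by blast

definition base_arc :: "'a \<times> 'a" where
  "base_arc = (SOME a. a \<in> graph_arcs E)"

definition Ori :: "('a \<times> 'a) set" where
  "Ori = some_orientation G E"

lemma base_arc_adj: "E (fst base_arc) (snd base_arc)"
proof -
  have "graph_arcs E \<noteq> {}" using half_arc_trans by (auto simp: half_arc_transitive_def)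
  then have "base_arc \<in> graph_arcs E" unfolding base_arc_def by (metis some_in_eq)
  then show ?thesis by (auto simp: graph_arcs_def)
qed

lemma G_orientation_Ori: "G_orientation G V E Ori"
proof -
  have "base_arc \<in> graph_arcs E" using base_arc_adj by (simp add: graph_arcs_def split_beta)
  then show ?thesis
    unfolding G_orientation_def Ori_def some_orientation_def base_arc_def[symmetric] by blast
qed

lemma Ori_eq: "Ori = {map_prod g g base_arc | g. g \<in> G}"
  by (simp add: Ori_def some_orientation_def arc_orbit_def base_arc_def map_prod_def split_beta)

lemma Ori_adj: assumes "(x, y) \<in> Ori" shows "E x y"
proof -
  obtain g where "g \<in> G" "x = g (fst base_arc)" "y = g (snd base_arc)"
    using assms by (auto simp: Ori_eq map_prod_def split_beta)
  then show ?thesis using G_adj base_arc_adj by simp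
qed

lemma Ori_V: "(x, y) \<in> Ori \<Longrightarrow> x \<in> V \<and> y \<in> V \<and> x \<noteq> y"
  using adjD[OF Ori_adj] by blast

lemma finite_Ori: "finite Ori"
proof -
  have "Ori \<subseteq> V \<times> V" using Ori_V by auto
  then show ?thesis using finite_V by (simp add: finite_subset)
qed

lemma Ori_closed: assumes "g \<in> G" "d \<in> Ori" shows "map_prod g g d \<in> Ori"
proof -
  obtain h where h: "h \<in> G" "d = map_prod h h base_arc" using assms Ori_eq by auto
  obtain k where k: "k \<in> G" "\<And>x. x \<in> V \<Longrightarrow> k x = g (h x)" using G_comp[OF assms(1) h(1)] by blast
  have "map_prod k k base_arc = map_prod g g d"
    using k h adjD[OF base_arc_adj] by (simp add: map_prod_def split_beta)
  then show ?thesis using k Ori_eq by auto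
qed

lemma Ori_transitive: assumes "d \<in> Ori" "d' \<in> Ori" shows "\<exists>g\<in>G. map_prod g g d = d'"
proof -
  obtain h where h: "h \<in> G" "d = map_prod h h base_arc" using assms Ori_eq by auto
  obtain h' where h': "h' \<in> G" "d' = map_prod h' h' base_arc" using assms Ori_eq by auto
  obtain h_inv where hi: "h_inv \<in> G" "\<And>x. x \<in> V \<Longrightarrow> h_inv (h x) = x" using G_inverse[OF h(1)] by blast
  obtain k where k: "k \<in> G" "\<And>x. x \<in> V \<Longrightarrow> k x = h' (h_inv x)" using G_comp[OF h'(1) hi(1)] by blast
  have "map_prod k k d = d'"
    using k h h' hi adjD[OF base_arc_adj] G_mem_V[OF h(1)] by (simp add: map_prod_def split_beta)
  then show ?thesis using k by blast
qed

lemma Ori_total: assumes "E x y" shows "(x, y) \<in> Ori \<or> (y, x) \<in> Ori"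
proof -
  have "{fst base_arc, snd base_arc} \<in> graph_edges E" "{x, y} \<in> graph_edges E"
    unfolding graph_edges_def using base_arc_adj assms by blast+
  then obtain g where "g \<in> G" "g ` {fst base_arc, snd base_arc} = {x, y}"
    using half_arc_trans unfolding half_arc_transitive_def by blast
  then have "map_prod g g base_arc \<in> Ori" "{g (fst base_arc), g (snd base_arc)} = {x, y}"
    using Ori_eq by auto
  then show ?thesis by (auto simp: map_prod_def split_beta doubleton_eq_iff)
qed

text \<open>If an edge were oriented both ways, arc-transitivity of G on the orbit would make G
  arc-transitive.\<close>
lemma Ori_asym: assumes "(x, y) \<in> Ori" shows "(y, x) \<notin> Ori"
proof
  assume yx: "(y, x) \<in> Ori"
  have all_arcs: "(p, q) \<in> Ori" if "E p q" for p q
  proof (rule ccontr)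
    assume "(p, q) \<notin> Ori"
    then have qp: "(q, p) \<in> Ori" using Ori_total[OF that] by auto
    obtain g where "g \<in> G" "map_prod g g (x, y) = (q, p)" using Ori_transitive[OF assms qp] by blast
    then show False using Ori_closed[OF _ yx, of g] \<open>(p, q) \<notin> Ori\<close> by auto
  qed
  have "\<exists>g\<in>G. g (fst a) = fst b \<and> g (snd a) = snd b"
    if "a \<in> graph_arcs E" "b \<in> graph_arcs E" for a b
  proof -
    have "a \<in> Ori" "b \<in> Ori" using that all_arcs by (auto simp: graph_arcs_def)
    then show ?thesis using Ori_transitive[of a b] by (auto simp: map_prod_def split_beta prod_eq_iff)
  qed
  then show False using half_arc_trans unfolding half_arc_transitive_def by blast
qed

lemma adj_iff_Ori: "E x y \<longleftrightarrow> (x, y) \<in> Ori \<or> (y, x) \<in> Ori"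
  using Ori_total Ori_adj adjD by blast

definition out_nbrs :: "'a \<Rightarrow> 'a set" where "out_nbrs v = {w. (v, w) \<in> Ori}"
definition in_nbrs :: "'a \<Rightarrow> 'a set" where "in_nbrs v = {w. (w, v) \<in> Ori}"

lemma finite_out_nbrs: "finite (out_nbrs v)" and finite_in_nbrs: "finite (in_nbrs v)"
  using Ori_V finite_V by (auto simp: out_nbrs_def in_nbrs_def intro: finite_subset)

lemma card_out_nbrs_le: assumes "v \<in> V" "v' \<in> V" shows "card (out_nbrs v) \<le> card (out_nbrs v')"
proof -
  obtain g where g: "g \<in> G" "g v = v'" using G_vertex_transitive assms by blast
  have "g ` out_nbrs v \<subseteq> out_nbrs v'"
    using Ori_closed[OF g(1)] g(2) by (auto simp: out_nbrs_def)
  moreover have "inj_on g (out_nbrs v)"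
    using G_inj[OF g(1)] Ori_V by (auto simp: out_nbrs_def inj_on_def)
  ultimately show ?thesis using finite_out_nbrs card_inj_on_le by blast
qed

lemma card_out_nbrs_add_card_in_nbrs: assumes "x \<in> V" shows "card (out_nbrs x) + card (in_nbrs x) = 4"
proof -
  have "{u. E x u} = out_nbrs x \<union> in_nbrs x" "out_nbrs x \<inter> in_nbrs x = {}"
    using adj_iff_Ori adjD Ori_asym by (auto simp: out_nbrs_def in_nbrs_def)
  moreover have "card {u. E x u} = 4" using tetravalent assms by (simp add: tetravalent_def)
  ultimately show ?thesis using card_Un_disjoint[OF finite_out_nbrs finite_in_nbrs] by simp
qed

lemma card_Ori_by_tails: "card Ori = (\<Sum>x\<in>V. card (out_nbrs x))"
proof -
  have "Sigma V out_nbrs = Ori" using Ori_V by (auto simp: out_nbrs_def)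
  then show ?thesis using finite_V finite_out_nbrs by (metis card_SigmaI)
qed

lemma card_Ori_by_heads: "card Ori = (\<Sum>x\<in>V. card (in_nbrs x))"
proof -
  have "Sigma V in_nbrs = prod.swap ` Ori"
  proof (intro equalityI subsetI)
    fix p assume "p \<in> Sigma V in_nbrs"
    then show "p \<in> prod.swap ` Ori"
      by (intro image_eqI[where x = "prod.swap p"]) (auto simp: in_nbrs_def)
  next
    fix p assume "p \<in> prod.swap ` Ori"
    then show "p \<in> Sigma V in_nbrs" using Ori_V by (auto simp: in_nbrs_def)
  qed
  moreover have "card (prod.swap ` Ori) = card Ori" by (simp add: card_image)
  ultimately show ?thesis using finite_V finite_in_nbrs by (metis card_SigmaI)
qed

text \<open>Out-degrees are constant by vertex-transitivity; counting Ori by tails and by heads then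
  forces in-degree = out-degree, and they sum to the valency 4.\<close>
lemma card_out_nbrs: "v \<in> V \<Longrightarrow> card (out_nbrs v) = 2"
  and card_in_nbrs: "v \<in> V \<Longrightarrow> card (in_nbrs v) = 2"
proof -
  assume v: "v \<in> V"
  define k where "k = card (out_nbrs v)"
  have out_k: "card (out_nbrs x) = k" if "x \<in> V" for x
    using card_out_nbrs_le v that k_def by (simp add: le_antisym)
  have in_k: "card (in_nbrs x) = 4 - k" if "x \<in> V" for x
    using card_out_nbrs_add_card_in_nbrs[OF that] out_k[OF that] by simp
  have "card Ori = card V * k" using card_Ori_by_tails out_k by simp
  moreover have "card Ori = card V * (4 - k)" using card_Ori_by_heads in_k by simp
  ultimately have "card V * k = card V * (4 - k)" by metis
  moreover have "card V \<noteq> 0" using v finite_V by auto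
  ultimately have "k = 4 - k" by (metis mult_left_cancel)
  then have "k = 2" by arith
  then show "card (out_nbrs v) = 2" "card (in_nbrs v) = 2" using out_k[OF v] in_k[OF v] by simp_all
qed

section \<open>Alternating cycles\<close>

definition other_in :: "'a \<times> 'a \<Rightarrow> 'a \<times> 'a" where
  "other_in d = (SOME x. (x, snd d) \<in> Ori \<and> x \<noteq> fst d, snd d)"

definition other_out :: "'a \<times> 'a \<Rightarrow> 'a \<times> 'a" where
  "other_out d = (fst d, SOME y. (fst d, y) \<in> Ori \<and> y \<noteq> snd d)"

lemma snd_other_in [simp]: "snd (other_in d) = snd d"
  by (simp add: other_in_def)

lemma fst_other_out [simp]: "fst (other_out d) = fst d"
  by (simp add: other_out_def)

lemma other_in:
  assumes "d \<in> Ori"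
  shows other_in_mem: "other_in d \<in> Ori" and fst_other_in_ne: "fst (other_in d) \<noteq> fst d"
    and other_in_cases: "e \<in> Ori \<Longrightarrow> snd e = snd d \<Longrightarrow> e = d \<or> e = other_in d"
proof -
  have in2: "card (in_nbrs (snd d)) = 2" using card_in_nbrs Ori_V assms by (metis prod.collapse)
  then obtain a b where "in_nbrs (snd d) = {a, b}" "a \<noteq> b" by (auto simp: card_2_iff)
  then have "\<exists>x. (x, snd d) \<in> Ori \<and> x \<noteq> fst d" using assms by (auto simp: in_nbrs_def set_eq_iff)
  then have x: "(fst (other_in d), snd d) \<in> Ori \<and> fst (other_in d) \<noteq> fst d"
    unfolding other_in_def fst_conv by (rule someI_ex)
  then show mem: "other_in d \<in> Ori" and "fst (other_in d) \<noteq> fst d"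
    by (metis prod.collapse snd_other_in)+
  assume "e \<in> Ori" "snd e = snd d"
  then have "fst e = fst d \<or> fst e = fst (other_in d)"
    using card_2_cases[OF in2] x assms by (simp add: in_nbrs_def) (metis prod.collapse)
  then show "e = d \<or> e = other_in d"
    using \<open>snd e = snd d\<close> by (metis prod.collapse snd_other_in)
qed

lemma other_out:
  assumes "d \<in> Ori"
  shows other_out_mem: "other_out d \<in> Ori" and snd_other_out_ne: "snd (other_out d) \<noteq> snd d"
    and other_out_cases: "e \<in> Ori \<Longrightarrow> fst e = fst d \<Longrightarrow> e = d \<or> e = other_out d"
proof -
  have out2: "card (out_nbrs (fst d)) = 2" using card_out_nbrs Ori_V assms by (metis prod.collapse)
  then obtain a b where "out_nbrs (fst d) = {a, b}" "a \<noteq> b" by (auto simp: card_2_iff)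
  then have "\<exists>y. (fst d, y) \<in> Ori \<and> y \<noteq> snd d" using assms by (auto simp: out_nbrs_def set_eq_iff)
  then have y: "(fst d, snd (other_out d)) \<in> Ori \<and> snd (other_out d) \<noteq> snd d"
    unfolding other_out_def snd_conv by (rule someI_ex)
  then show mem: "other_out d \<in> Ori" and "snd (other_out d) \<noteq> snd d"
    by (metis prod.collapse fst_other_out)+
  assume "e \<in> Ori" "fst e = fst d"
  then have "snd e = snd d \<or> snd e = snd (other_out d)"
    using card_2_cases[OF out2] y assms by (simp add: out_nbrs_def) (metis prod.collapse)
  then show "e = d \<or> e = other_out d"
    using \<open>fst e = fst d\<close> by (metis prod.collapse fst_other_out)
qed

lemma other_in_ne: "d \<in> Ori \<Longrightarrow> other_in d \<noteq> d"
  using fst_other_in_ne by metis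

lemma other_out_ne: "d \<in> Ori \<Longrightarrow> other_out d \<noteq> d"
  using snd_other_out_ne by metis

lemma other_in_other_in [simp]: "d \<in> Ori \<Longrightarrow> other_in (other_in d) = d"
  using other_in_cases[of "other_in d" "other_in (other_in d)"] other_in_cases[of d "other_in (other_in d)"]
    other_in_mem other_in_ne by (metis snd_other_in)

lemma other_out_other_out [simp]: "d \<in> Ori \<Longrightarrow> other_out (other_out d) = d"
  using other_out_cases[of "other_out d" "other_out (other_out d)"] other_out_cases[of d "other_out (other_out d)"]
    other_out_mem other_out_ne by (metis fst_other_out)

lemma other_in_map:
  assumes "g \<in> G" "d \<in> Ori"
  shows "map_prod g g (other_in d) = other_in (map_prod g g d)"
proof -
  have "g (fst (other_in d)) \<noteq> g (fst d)"
    using G_inj[OF assms(1)] Ori_V other_in_mem[OF assms(2)] assms(2) fst_other_in_ne[OF assms(2)]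
    by (metis prod.collapse)
  then show ?thesis
    using other_in_cases[OF Ori_closed[OF assms] Ori_closed[OF assms(1) other_in_mem[OF assms(2)]]]
    by (auto simp: map_prod_def split_beta)
qed

lemma other_out_map:
  assumes "g \<in> G" "d \<in> Ori"
  shows "map_prod g g (other_out d) = other_out (map_prod g g d)"
proof -
  have "g (snd (other_out d)) \<noteq> g (snd d)"
    using G_inj[OF assms(1)] Ori_V other_out_mem[OF assms(2)] assms(2) snd_other_out_ne[OF assms(2)]
    by (metis prod.collapse)
  then show ?thesis
    using other_out_cases[OF Ori_closed[OF assms] Ori_closed[OF assms(1) other_out_mem[OF assms(2)]]]
    by (auto simp: map_prod_def split_beta)
qed

definition alt_step :: "'a \<times> 'a \<Rightarrow> 'a \<times> 'a" where
  "alt_step d = other_out (other_in d)"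

definition alt_step_inv :: "'a \<times> 'a \<Rightarrow> 'a \<times> 'a" where
  "alt_step_inv d = other_in (other_out d)"

text \<open>Writing d = (u_0, w_0), alt_arc d k = (u_k, w_k) walks around the alternating cycle
  u_0 -> w_0 <- u_1 -> w_1 <- u_2 ..., so that other_in (u_k, w_k) = (u_(k+1), w_k).\<close>
definition alt_arc :: "'a \<times> 'a \<Rightarrow> int \<Rightarrow> 'a \<times> 'a" where
  "alt_arc d k = (if 0 \<le> k then (alt_step ^^ nat k) d else (alt_step_inv ^^ nat (- k)) d)"

definition alt_tail :: "'a \<times> 'a \<Rightarrow> int \<Rightarrow> 'a" where "alt_tail d k = fst (alt_arc d k)"
definition alt_head :: "'a \<times> 'a \<Rightarrow> int \<Rightarrow> 'a" where "alt_head d k = snd (alt_arc d k)"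

lemma alt_arc_eq: "alt_arc d k = (alt_tail d k, alt_head d k)"
  by (simp add: alt_tail_def alt_head_def)

lemma alt_arc_0 [simp]: "alt_arc d 0 = d"
  by (simp add: alt_arc_def)

lemma alt_tail_0 [simp]: "alt_tail d 0 = fst d" and alt_head_0 [simp]: "alt_head d 0 = snd d"
  by (simp_all add: alt_tail_def alt_head_def)

lemma funpow_alt_step_mem: "d \<in> Ori \<Longrightarrow> (alt_step ^^ n) d \<in> Ori"
  and funpow_alt_step_inv_mem: "d \<in> Ori \<Longrightarrow> (alt_step_inv ^^ n) d \<in> Ori"
  by (induction n) (auto simp: alt_step_def alt_step_inv_def other_in_mem other_out_mem)

lemma alt_arc_mem: "d \<in> Ori \<Longrightarrow> alt_arc d k \<in> Ori"
  by (simp add: alt_arc_def funpow_alt_step_mem funpow_alt_step_inv_mem)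

lemma alt_tail_mem_V: "d \<in> Ori \<Longrightarrow> alt_tail d k \<in> V" and alt_head_mem_V: "d \<in> Ori \<Longrightarrow> alt_head d k \<in> V"
  using Ori_V alt_arc_mem alt_arc_eq by metis+

lemma alt_arc_succ: assumes "d \<in> Ori" shows "alt_arc d (k + 1) = alt_step (alt_arc d k)"
proof (cases "0 \<le> k")
  case True
  then show ?thesis by (simp add: alt_arc_def nat_add_distrib)
next
  case False
  then obtain n where n: "nat (- k) = Suc n" by (metis nat_0_iff not_le not0_implies_Suc neg_0_less_iff_less)
  have "alt_arc d k = alt_step_inv ((alt_step_inv ^^ n) d)" using False n by (simp add: alt_arc_def)
  moreover have "alt_arc d (k + 1) = (alt_step_inv ^^ n) d"
  proof -
    have "nat (- (k + 1)) = n" "0 \<le> k + 1 \<Longrightarrow> n = 0 \<and> nat (k + 1) = 0" using False n by arith+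
    then show ?thesis by (auto simp: alt_arc_def)
  qed
  moreover have "(alt_step_inv ^^ n) d \<in> Ori" using funpow_alt_step_inv_mem[OF assms] .
  ultimately show ?thesis
    by (simp add: alt_step_def alt_step_inv_def other_in_mem other_out_mem)
qed

lemma alt_arc_pred: assumes "d \<in> Ori" shows "alt_arc d (k - 1) = alt_step_inv (alt_arc d k)"
  using alt_arc_succ[OF assms, of "k - 1"] alt_arc_mem[OF assms, of "k - 1"]
  by (simp add: alt_step_def alt_step_inv_def other_in_mem other_out_mem)

lemma alt_arc_add: assumes "d \<in> Ori" shows "alt_arc (alt_arc d j) k = alt_arc d (j + k)"
proof (induction k rule: int_induct[where k = 0])
  case (step1 i) then show ?case using alt_arc_succ alt_arc_mem assms by (metis add.assoc)
next
  case (step2 i) then show ?case using alt_arc_pred alt_arc_mem assms by (metis add_diff_eq)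
qed simp

lemma alt_arc_map:
  assumes "g \<in> G" "d \<in> Ori"
  shows "map_prod g g (alt_arc d k) = alt_arc (map_prod g g d) k"
proof (induction k rule: int_induct[where k = 0])
  case (step1 i) then show ?case
    using alt_arc_succ alt_arc_mem assms Ori_closed other_in_map other_out_map other_in_mem
    by (metis alt_step_def)
next
  case (step2 i) then show ?case
    using alt_arc_pred alt_arc_mem assms Ori_closed other_in_map other_out_map other_out_mem
    by (metis alt_step_inv_def)
qed simp

lemma alt_arc_other_in: assumes "d \<in> Ori" shows "alt_arc (other_in d) k = other_in (alt_arc d (- k))"
proof (induction k rule: int_induct[where k = 0])
  case (step1 i)
  have a: "alt_arc d (- i) \<in> Ori" using alt_arc_mem assms .
  have "alt_arc (other_in d) (i + 1) = alt_step (other_in (alt_arc d (- i)))"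
    using alt_arc_succ other_in_mem assms step1 by metis
  also have "\<dots> = other_in (alt_step_inv (alt_arc d (- i)))"
    using a by (simp add: alt_step_def alt_step_inv_def other_in_mem other_out_mem)
  also have "\<dots> = other_in (alt_arc d (- (i + 1)))" using alt_arc_pred[OF assms, of "- i"] by simp
  finally show ?case .
next
  case (step2 i)
  have "alt_arc (other_in d) (i - 1) = alt_step_inv (other_in (alt_arc d (- i)))"
    using alt_arc_pred other_in_mem assms step2 by metis
  also have "\<dots> = other_in (alt_step (alt_arc d (- i)))" by (simp add: alt_step_def alt_step_inv_def)
  also have "\<dots> = other_in (alt_arc d (- (i - 1)))" using alt_arc_succ[OF assms, of "- i"] by simp
  finally show ?case .
qed simp

lemma other_out_alt_arc: assumes "d \<in> Ori" shows "other_out (alt_arc d (k + 1)) = other_in (alt_arc d k)"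
  using alt_arc_succ[OF assms] alt_arc_mem[OF assms] other_in_mem by (simp add: alt_step_def)

lemma other_in_alt_arc: assumes "d \<in> Ori" shows "other_in (alt_arc d k) = (alt_tail d (k + 1), alt_head d k)"
proof -
  have "fst (other_in (alt_arc d k)) = fst (alt_step (alt_arc d k))" by (simp add: alt_step_def)
  then show ?thesis using alt_arc_succ[OF assms] by (metis alt_head_def alt_tail_def prod.collapse snd_other_in)
qed

text \<open>An other_in-reflection of the walk onto itself would propagate symmetrically in both
  directions and eventually fix an arc, which other_in and other_out never do.\<close>
lemma other_in_alt_arc_ne: assumes "d \<in> Ori" shows "other_in (alt_arc d p) \<noteq> alt_arc d q"
proof
  assume h: "other_in (alt_arc d p) = alt_arc d q"
  have symm: "alt_arc d p = other_in (alt_arc d q)" if "other_in (alt_arc d p) = alt_arc d q" for p q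
    using that other_in_other_in alt_arc_mem assms by metis
  have step: "other_in (alt_arc d (p + 1)) = alt_arc d (q - 1)" if "other_in (alt_arc d p) = alt_arc d q" for p q
  proof -
    have "alt_arc d (p + 1) = other_out (alt_arc d q)"
      using that alt_arc_succ[OF assms] by (simp add: alt_step_def)
    also have "\<dots> = other_in (alt_arc d (q - 1))" using other_out_alt_arc[OF assms, of "q - 1"] by simp
    finally show ?thesis using symm by metis
  qed
  have all: "other_in (alt_arc d (p + t)) = alt_arc d (q - t)" for t
  proof (induction t rule: int_induct[where k = 0])
    case (step1 i) then show ?case using step[OF step1(2)] by (simp add: algebra_simps)
  next
    case (step2 i)
    have "other_in (alt_arc d (q - i)) = alt_arc d (p + i)" using symm[OF step2(2)] by simp
    then have "other_in (alt_arc d (q - i + 1)) = alt_arc d (p + i - 1)" by (rule step)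
    then have "alt_arc d (q - i + 1) = other_in (alt_arc d (p + i - 1))" by (rule symm)
    then show ?case by (simp add: algebra_simps)
  qed (use h in simp)
  obtain t where "q - p = 2 * t \<or> q - p = 2 * t + 1" by (metis evenE oddE)
  then show False
  proof
    assume "q - p = 2 * t"
    then have "other_in (alt_arc d (p + t)) = alt_arc d (p + t)" using all[of t] by (simp add: algebra_simps)
    then show False using other_in_ne alt_arc_mem assms by metis
  next
    assume "q - p = 2 * t + 1"
    then have "other_in (alt_arc d (p + t)) = alt_arc d (p + t + 1)" using all[of t] by (simp add: algebra_simps)
    then have "other_out (alt_arc d (p + t + 1)) = alt_arc d (p + t + 1)" using other_out_alt_arc[OF assms] by metis
    then show False using other_out_ne alt_arc_mem assms by metis
  qed
qed

lemma alt_rotation: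
  assumes "d \<in> Ori"
  obtains g where "g \<in> G" "\<And>k. g (alt_tail d k) = alt_tail d (k + t)" "\<And>k. g (alt_head d k) = alt_head d (k + t)"
proof -
  obtain g where g: "g \<in> G" "map_prod g g d = alt_arc d t" using Ori_transitive alt_arc_mem assms by blast
  have "map_prod g g (alt_arc d k) = alt_arc d (k + t)" for k
    using alt_arc_map[OF g(1) assms] g(2) alt_arc_add assms by (simp add: add.commute)
  then show ?thesis using that g(1) by (metis alt_arc_eq map_prod_simp prod.inject)
qed

lemma alt_reflection:
  assumes "d \<in> Ori"
  obtains g where "g \<in> G" "\<And>k. g (alt_tail d k) = alt_tail d (1 - k)" "\<And>k. g (alt_head d k) = alt_head d (- k)"
proof -
  obtain g where g: "g \<in> G" "map_prod g g d = other_in d" using Ori_transitive other_in_mem assms by blast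
  have "map_prod g g (alt_arc d k) = (alt_tail d (1 - k), alt_head d (- k))" for k
    using alt_arc_map[OF g(1) assms] g(2) alt_arc_other_in[OF assms] other_in_alt_arc[OF assms, of "- k"]
    by (simp add: add.commute)
  then show ?thesis using that g(1) by (metis alt_arc_eq map_prod_simp prod.inject)
qed

text \<open>If a tail u_i were a head w_j, rotating and reflecting the cycle would yield a vertex pair
  whose edge is oriented both ways.\<close>
lemma alt_tail_ne_alt_head: assumes "d \<in> Ori" shows "alt_tail d i \<noteq> alt_head d j"
proof
  assume h: "alt_tail d i = alt_head d j"
  define c where "c = i - j"
  obtain g where "g \<in> G" "\<And>k. g (alt_tail d k) = alt_tail d (k + - j)" "\<And>k. g (alt_head d k) = alt_head d (k + - j)"
    using alt_rotation assms by blast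
  then have 1: "alt_head d 0 = alt_tail d c" using h c_def by (metis add.right_inverse diff_conv_add_uminus)
  obtain g' where "g' \<in> G" "\<And>k. g' (alt_tail d k) = alt_tail d (1 - k)" "\<And>k. g' (alt_head d k) = alt_head d (- k)"
    using alt_reflection assms by blast
  then have 2: "alt_tail d (1 - c) = alt_head d 0" using 1 by (metis minus_zero)
  obtain g'' where "g'' \<in> G" "\<And>k. g'' (alt_tail d k) = alt_tail d (k + - c)" "\<And>k. g'' (alt_head d k) = alt_head d (k + - c)"
    using alt_rotation assms by blast
  then have 3: "alt_head d (- c) = alt_tail d 0" using 1 by (metis add.right_inverse add_0)
  have "(alt_head d 0, alt_tail d 0) \<in> Ori"
    using other_in_alt_arc[OF assms, of "- c"] 2 3 other_in_mem alt_arc_mem assms by (metis add.commute diff_conv_add_uminus)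
  moreover have "(alt_tail d 0, alt_head d 0) \<in> Ori" using alt_arc_mem assms alt_arc_eq by metis
  ultimately show False using Ori_asym by blast
qed


lemma alt_arc_eq_shift: "d \<in> Ori \<Longrightarrow> alt_arc d i = alt_arc d j \<Longrightarrow> alt_arc d (j - i) = d"
  using alt_arc_add[of d j "- i"] alt_arc_add[of d i "- i"] by simp

lemma ex_alt_arc_period: assumes "d \<in> Ori" shows "\<exists>n. 0 < n \<and> alt_arc d (int n) = d"
proof -
  have "(\<lambda>n. alt_arc d (int n)) ` {..card Ori} \<subseteq> Ori" using alt_arc_mem[OF assms] by auto
  then have "\<not> inj_on (\<lambda>n. alt_arc d (int n)) {..card Ori}"
    using finite_Ori card_inj_on_le by (metis card_atMost lessI not_le)
  then obtain i j where "i < j" "alt_arc d (int i) = alt_arc d (int j)"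
    unfolding inj_on_def by (metis linorder_neqE_nat)
  then show ?thesis using alt_arc_eq_shift[OF assms] by (intro exI[of _ "j - i"]) (simp add: of_nat_diff)
qed

definition alt_period :: "'a \<times> 'a \<Rightarrow> nat" where
  "alt_period d = (LEAST n. 0 < n \<and> alt_arc d (int n) = d)"

lemma alt_period: assumes "d \<in> Ori"
  shows alt_period_pos: "0 < alt_period d" and alt_arc_alt_period: "alt_arc d (int (alt_period d)) = d"
  using LeastI_ex[OF ex_alt_arc_period[OF assms]] by (simp_all add: alt_period_def)

lemma alt_arc_mod: assumes "d \<in> Ori" shows "alt_arc d k = alt_arc d (k mod int (alt_period d))"
proof -
  define P where "P = int (alt_period d)"
  have "alt_arc d (k + P * n) = alt_arc d k" for k n
  proof (induction n rule: int_induct[where k = 0])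
    case (step1 i)
    have "k + P * (i + 1) = P + (k + P * i)" by (simp add: algebra_simps)
    then show ?case using step1 alt_arc_add[OF assms] alt_arc_alt_period[OF assms] P_def by metis
  next
    case (step2 i)
    have "k + P * i = P + (k + P * (i - 1))" by (simp add: algebra_simps)
    then show ?case using step2 alt_arc_add[OF assms] alt_arc_alt_period[OF assms] P_def by metis
  qed simp
  then have "alt_arc d (k mod P + P * (k div P)) = alt_arc d (k mod P)" .
  then show ?thesis using P_def by simp
qed

lemma alt_arc_eq_iff:
  assumes "d \<in> Ori"
  shows "alt_arc d i = alt_arc d j \<longleftrightarrow> i mod int (alt_period d) = j mod int (alt_period d)"
proof
  define P where "P = int (alt_period d)"
  assume "alt_arc d i = alt_arc d j"
  then have eq: "alt_arc d (i mod P) = alt_arc d (j mod P)" using alt_arc_mod[OF assms] P_def by metis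
  have no_shorter: "alt_arc d (int n) \<noteq> d" if "0 < n" "int n < P" for n
    using not_less_Least[of n "\<lambda>n. 0 < n \<and> alt_arc d (int n) = d"] that
    unfolding P_def alt_period_def by auto
  have bounds: "0 \<le> i mod P" "i mod P < P" "0 \<le> j mod P" "j mod P < P"
    using alt_period_pos[OF assms] P_def by simp_all
  show "i mod P = j mod P"
  proof (rule ccontr)
    assume "i mod P \<noteq> j mod P"
    then consider "i mod P < j mod P" | "j mod P < i mod P" by linarith
    then show False
    proof cases
      case 1
      then show False using no_shorter[of "nat (j mod P - i mod P)"] alt_arc_eq_shift[OF assms eq] bounds
        by simp
    next
      case 2
      then show False using no_shorter[of "nat (i mod P - j mod P)"] alt_arc_eq_shift[OF assms eq[symmetric]] bounds
        by simp
    qed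
  qed
qed (metis alt_arc_mod[OF assms])

lemma alt_tail_eq_iff:
  assumes "d \<in> Ori"
  shows "alt_tail d i = alt_tail d j \<longleftrightarrow> i mod int (alt_period d) = j mod int (alt_period d)"
proof
  assume "alt_tail d i = alt_tail d j"
  then have "alt_arc d j = alt_arc d i \<or> alt_arc d j = other_out (alt_arc d i)"
    using other_out_cases alt_arc_mem assms by (simp add: alt_tail_def)
  moreover have "other_out (alt_arc d i) = other_in (alt_arc d (i - 1))"
    using other_out_alt_arc[OF assms, of "i - 1"] by simp
  ultimately show "i mod int (alt_period d) = j mod int (alt_period d)"
    using other_in_alt_arc_ne[OF assms] alt_arc_eq_iff[OF assms] by metis
qed (metis alt_arc_mod[OF assms] alt_tail_def)

lemma alt_head_eq_iff:
  assumes "d \<in> Ori"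
  shows "alt_head d i = alt_head d j \<longleftrightarrow> i mod int (alt_period d) = j mod int (alt_period d)"
proof
  assume "alt_head d i = alt_head d j"
  then have "alt_arc d j = alt_arc d i \<or> alt_arc d j = other_in (alt_arc d i)"
    using other_in_cases alt_arc_mem assms by (simp add: alt_head_def)
  then show "i mod int (alt_period d) = j mod int (alt_period d)"
    using other_in_alt_arc_ne[OF assms] alt_arc_eq_iff[OF assms] by metis
qed (metis alt_arc_mod[OF assms] alt_head_def)

lemma alt_period_ge_2: assumes "d \<in> Ori" shows "2 \<le> alt_period d"
proof -
  have "alt_tail d 1 \<noteq> alt_tail d 0"
    using fst_other_in_ne[OF assms] other_in_alt_arc[OF assms, of 0] by simp
  then have "alt_period d \<noteq> 1" using alt_tail_eq_iff[OF assms, of 1 0] by auto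
  then show ?thesis using alt_period_pos[OF assms] by linarith
qed

definition alt_vertex :: "'a \<times> 'a \<Rightarrow> int \<Rightarrow> 'a" where
  "alt_vertex d p = (if even p then alt_tail d (p div 2) else alt_head d (p div 2))"

lemma alt_vertex_even [simp]: "alt_vertex d (2 * k) = alt_tail d k"
  and alt_vertex_odd [simp]: "alt_vertex d (2 * k + 1) = alt_head d k"
  by (simp_all add: alt_vertex_def)

lemma alt_vertex_cases:
  obtains k where "p = 2 * k" "alt_vertex d p = alt_tail d k"
  | k where "p = 2 * k + 1" "alt_vertex d p = alt_head d k"
  by (metis alt_vertex_even alt_vertex_odd evenE oddE)

lemma alt_vertex_mem_V: "d \<in> Ori \<Longrightarrow> alt_vertex d p \<in> V"
  using alt_tail_mem_V alt_head_mem_V by (simp add: alt_vertex_def)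

lemma alt_vertex_mod:
  assumes "d \<in> Ori" shows "alt_vertex d p = alt_vertex d (p mod (2 * int (alt_period d)))"
proof -
  have pos: "0 < int (alt_period d)" using alt_period_pos[OF assms] by simp
  show ?thesis
  proof (cases p d rule: alt_vertex_cases)
    case (1 k)
    then show ?thesis using alt_tail_eq_iff[OF assms] by (simp add: mod_mult_mult1)
  next
    case (2 k)
    then show ?thesis using alt_head_eq_iff[OF assms] pos by (simp add: mod_double_plus_one)
  qed
qed

lemma alt_vertex_eq_iff:
  assumes "d \<in> Ori"
  shows "alt_vertex d p = alt_vertex d q \<longleftrightarrow> p mod (2 * int (alt_period d)) = q mod (2 * int (alt_period d))"
proof
  have pos: "0 < int (alt_period d)" using alt_period_pos[OF assms] by simp
  assume eq: "alt_vertex d p = alt_vertex d q"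
  show "p mod (2 * int (alt_period d)) = q mod (2 * int (alt_period d))"
  proof (cases p d rule: alt_vertex_cases; cases q d rule: alt_vertex_cases)
    fix a b assume "p = 2 * a" "alt_vertex d p = alt_tail d a" "q = 2 * b" "alt_vertex d q = alt_tail d b"
    then show ?thesis using eq alt_tail_eq_iff[OF assms] by (simp add: mod_mult_mult1)
  next
    fix a b assume "p = 2 * a + 1" "alt_vertex d p = alt_head d a" "q = 2 * b + 1" "alt_vertex d q = alt_head d b"
    then show ?thesis using eq alt_head_eq_iff[OF assms] pos by (simp add: mod_double_plus_one)
  qed (use eq alt_tail_ne_alt_head[OF assms] in metis)+
qed (metis alt_vertex_mod[OF assms])

lemma alt_vertex_oriented:
  assumes "d \<in> Ori"
  shows "even p \<Longrightarrow> (alt_vertex d p, alt_vertex d (p + 1)) \<in> Ori \<and> (alt_vertex d (p + 2), alt_vertex d (p + 1)) \<in> Ori"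
    and "odd p \<Longrightarrow> (alt_vertex d (p + 1), alt_vertex d p) \<in> Ori \<and> (alt_vertex d (p + 1), alt_vertex d (p + 2)) \<in> Ori"
proof -
  have arc: "(alt_tail d k, alt_head d k) \<in> Ori" for k using alt_arc_mem[OF assms] alt_arc_eq by metis
  have co_arc: "(alt_tail d (k + 1), alt_head d k) \<in> Ori" for k
    using other_in_mem alt_arc_mem[OF assms] other_in_alt_arc[OF assms] by metis
  show "even p \<Longrightarrow> (alt_vertex d p, alt_vertex d (p + 1)) \<in> Ori \<and> (alt_vertex d (p + 2), alt_vertex d (p + 1)) \<in> Ori"
  proof -
    assume "even p"
    then obtain k where k: "p = 2 * k" by (metis evenE)
    have "p + 1 = 2 * k + 1" "p + 2 = 2 * (k + 1)" using k by simp_all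
    then show ?thesis using arc co_arc k by (metis alt_vertex_even alt_vertex_odd)
  qed
  show "odd p \<Longrightarrow> (alt_vertex d (p + 1), alt_vertex d p) \<in> Ori \<and> (alt_vertex d (p + 1), alt_vertex d (p + 2)) \<in> Ori"
  proof -
    assume "odd p"
    then obtain k where k: "p = 2 * k + 1" by (metis oddE)
    have "p + 1 = 2 * (k + 1)" "p + 2 = 2 * (k + 1) + 1" using k by simp_all
    then show ?thesis using arc co_arc k by (metis alt_vertex_even alt_vertex_odd)
  qed
qed

lemma alt_vertex_adj: "d \<in> Ori \<Longrightarrow> E (alt_vertex d p) (alt_vertex d (p + 1))"
  using alt_vertex_oriented[of d p] Ori_adj adjD by blast

definition alt_list :: "'a \<times> 'a \<Rightarrow> 'a list" where
  "alt_list d = map (\<lambda>i. alt_vertex d (int i)) [0..<2 * alt_period d]"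

lemma length_alt_list [simp]: "length (alt_list d) = 2 * alt_period d"
  by (simp add: alt_list_def)

lemma alt_list_nth_mod:
  assumes "d \<in> Ori" shows "alt_list d ! (i mod (2 * alt_period d)) = alt_vertex d (int i)"
  using alt_period_pos[OF assms] alt_vertex_mod[OF assms, of "int i"]
  by (simp add: alt_list_def of_nat_mod)

lemma alt_list_is_cycle: assumes "d \<in> Ori" shows "is_cycle V E (alt_list d)"
  unfolding is_cycle_def
proof (intro conjI allI impI)
  show "distinct (alt_list d)"
    using alt_vertex_eq_iff[OF assms] alt_period_pos[OF assms]
    by (auto simp: alt_list_def distinct_map inj_on_def of_nat_mod[symmetric])
  show "3 \<le> length (alt_list d)" using alt_period_ge_2[OF assms] by simp
  show "set (alt_list d) \<subseteq> V" using alt_vertex_mem_V[OF assms] by (auto simp: alt_list_def)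
  fix i assume "i < length (alt_list d)"
  then show "E (alt_list d ! i) (alt_list d ! ((i + 1) mod length (alt_list d)))"
    using alt_list_nth_mod[OF assms, of i] alt_list_nth_mod[OF assms, of "i + 1"] alt_vertex_adj[OF assms, of "int i"]
    by (simp add: add.commute)
qed

lemma alt_list_alternating: assumes "d \<in> Ori" shows "alternating Ori (alt_list d)"
  unfolding alternating_def Let_def
proof (intro allI impI)
  fix i assume "i < length (alt_list d)"
  then have "alt_list d ! i = alt_vertex d (int i)"
    "alt_list d ! ((i + 1) mod length (alt_list d)) = alt_vertex d (int i + 1)"
    "alt_list d ! ((i + 2) mod length (alt_list d)) = alt_vertex d (int i + 2)"
    using alt_list_nth_mod[OF assms, of i] alt_list_nth_mod[OF assms, of "i + 1"]
      alt_list_nth_mod[OF assms, of "i + 2"] by (simp_all add: add.commute)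
  then show "(alt_list d ! i, alt_list d ! ((i + 1) mod length (alt_list d))) \<in> Ori \<and>
      (alt_list d ! ((i + 2) mod length (alt_list d)), alt_list d ! ((i + 1) mod length (alt_list d))) \<in> Ori \<or>
      (alt_list d ! ((i + 1) mod length (alt_list d)), alt_list d ! i) \<in> Ori \<and>
      (alt_list d ! ((i + 1) mod length (alt_list d)), alt_list d ! ((i + 2) mod length (alt_list d))) \<in> Ori"
    using alt_vertex_oriented[OF assms, of "int i"] by (cases "even (int i)") simp_all
qed

definition alt_cycle :: "'a \<times> 'a \<Rightarrow> 'a set set" where
  "alt_cycle d = int_cycle_edges (alt_vertex d)"

lemma cycle_edges_alt_list: assumes "d \<in> Ori" shows "cycle_edges (alt_list d) = alt_cycle d"
  unfolding alt_cycle_def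
proof (rule cycle_edges_eq_int_cycle_edges[where c = 0])
  show "alt_list d \<noteq> []" using alt_period_pos[OF assms] by (simp add: alt_list_def)
  fix p
  have len: "int (length (alt_list d)) = 2 * int (alt_period d)" by simp
  have "alt_vertex d p = alt_vertex d (p mod (2 * int (alt_period d)))" by (rule alt_vertex_mod[OF assms])
  also have "\<dots> = alt_list d ! nat (p mod (2 * int (alt_period d)))"
    using alt_period_pos[OF assms] by (simp add: alt_list_def nat_less_iff)
  finally show "alt_vertex d p = alt_list d ! nat ((p + 0) mod int (length (alt_list d)))"
    unfolding len add_0_right .
qed

lemma alt_cycle_mem: assumes "d \<in> Ori" shows "alt_cycle d \<in> alt_cycles G V E"
proof -
  have "alt_cycle d = cycle_edges (alt_list d) \<and> is_cycle V E (alt_list d) \<and> alternating Ori (alt_list d)"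
    using alt_list_is_cycle alt_list_alternating cycle_edges_alt_list assms by simp
  then show ?thesis unfolding alt_cycles_def Ori_def[symmetric] by blast
qed

lemma card_alt_cycle: "d \<in> Ori \<Longrightarrow> card (alt_cycle d) = 2 * alt_period d"
  using card_cycle_edges[of "alt_list d"] alt_list_is_cycle cycle_edges_alt_list
  by (simp add: is_cycle_def)


lemma alt_vertex_alt_arc: assumes "d \<in> Ori" shows "alt_vertex (alt_arc d k) p = alt_vertex d (p + 2 * k)"
proof -
  have "alt_tail (alt_arc d k) j = alt_tail d (k + j)" "alt_head (alt_arc d k) j = alt_head d (k + j)" for j
    using alt_arc_add[OF assms] by (simp_all add: alt_tail_def alt_head_def)
  moreover have "2 * j + 2 * k = 2 * (k + j)" "2 * j + 1 + 2 * k = 2 * (k + j) + 1" for j :: int by simp_all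
  ultimately show ?thesis
    by (cases p "alt_arc d k" rule: alt_vertex_cases) (metis alt_vertex_even alt_vertex_odd)+
qed

lemma alt_vertex_other_in: assumes "d \<in> Ori" shows "alt_vertex (other_in d) p = alt_vertex d (2 - p)"
proof -
  have "alt_tail (other_in d) j = alt_tail d (1 - j)" "alt_head (other_in d) j = alt_head d (- j)" for j
    using alt_arc_other_in[OF assms, of j] other_in_alt_arc[OF assms, of "- j"]
    by (simp_all add: alt_tail_def alt_head_def)
  moreover have "2 - 2 * k = 2 * (1 - k)" "2 - (2 * k + 1) = 2 * (- k) + 1" for k :: int by simp_all
  ultimately show ?thesis by (cases p "other_in d" rule: alt_vertex_cases) (metis alt_vertex_even alt_vertex_odd)+
qed

lemma alt_vertex_map:
  assumes "g \<in> G" "d \<in> Ori" shows "alt_vertex (map_prod g g d) p = g (alt_vertex d p)"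
  using alt_arc_map[OF assms] by (simp add: alt_vertex_def alt_tail_def alt_head_def) (metis fst_map_prod snd_map_prod)

lemma alt_cycle_alt_arc: "d \<in> Ori \<Longrightarrow> alt_cycle (alt_arc d k) = alt_cycle d"
  unfolding alt_cycle_def by (rule int_cycle_edges_shift) (rule alt_vertex_alt_arc)

lemma alt_cycle_other_in: "d \<in> Ori \<Longrightarrow> alt_cycle (other_in d) = alt_cycle d"
  unfolding alt_cycle_def by (rule int_cycle_edges_reflect) (rule alt_vertex_other_in)

lemma alt_cycle_other_out: assumes "d \<in> Ori" shows "alt_cycle (other_out d) = alt_cycle d"
proof -
  have "other_out d = other_in (alt_arc d (- 1))" using other_out_alt_arc[OF assms, of "- 1"] by simp
  then show ?thesis using alt_cycle_other_in alt_cycle_alt_arc alt_arc_mem assms by metis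
qed

lemma cyc_act_alt_cycle:
  assumes "g \<in> G" "d \<in> Ori" shows "cyc_act g (alt_cycle d) = alt_cycle (map_prod g g d)"
proof -
  have "alt_vertex (map_prod g g d) = g \<circ> alt_vertex d" using alt_vertex_map[OF assms] by auto
  then show ?thesis by (simp add: alt_cycle_def cyc_act_int_cycle_edges)
qed

lemma cycle_vertices_alt_cycle: "cycle_vertices (alt_cycle d) = range (alt_vertex d)"
  by (simp add: alt_cycle_def cycle_vertices_int_cycle_edges)

lemma alt_tail_mem_alt_cycle: "alt_tail d k \<in> cycle_vertices (alt_cycle d)"
  and alt_head_mem_alt_cycle: "alt_head d k \<in> cycle_vertices (alt_cycle d)"
  unfolding cycle_vertices_alt_cycle by (metis alt_vertex_even alt_vertex_odd rangeI)+

lemma mem_alt_cycle_cases: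
  assumes "x \<in> cycle_vertices (alt_cycle d)"
  obtains k where "x = alt_tail d k" | k where "x = alt_head d k"
  using assms unfolding cycle_vertices_alt_cycle by (metis alt_vertex_cases imageE)

lemma cycle_vertices_alt_cycle_subset: "d \<in> Ori \<Longrightarrow> cycle_vertices (alt_cycle d) \<subseteq> V"
  using alt_vertex_mem_V[of d] by (auto simp: cycle_vertices_alt_cycle)

lemma oriented_edge_in_alt_cycle:
  assumes "d \<in> Ori" "(x, y) \<in> Ori" "{x, y} \<in> alt_cycle d"
  shows "\<exists>k. (x, y) = alt_arc d k \<or> (x, y) = other_in (alt_arc d k)"
proof -
  obtain p where p: "{x, y} = {alt_vertex d p, alt_vertex d (p + 1)}"
    using assms(3) by (auto simp: alt_cycle_def int_cycle_edges_def)
  show ?thesis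
  proof (cases p d rule: alt_vertex_cases)
    case (1 k)
    then have "alt_vertex d (p + 1) = alt_head d k" by simp
    moreover have "(alt_tail d k, alt_head d k) \<in> Ori" using alt_arc_mem[OF assms(1)] alt_arc_eq by metis
    ultimately have "(x, y) = (alt_tail d k, alt_head d k)"
      using p 1 assms(2) Ori_asym by (auto simp: doubleton_eq_iff)
    then show ?thesis using alt_arc_eq by metis
  next
    case (2 k)
    then have "alt_vertex d (p + 1) = alt_tail d (k + 1)"
      using alt_vertex_even[of d "k + 1"] by (simp add: algebra_simps)
    moreover have "(alt_tail d (k + 1), alt_head d k) \<in> Ori"
      using other_in_alt_arc[OF assms(1)] other_in_mem alt_arc_mem[OF assms(1)] by metis
    ultimately have "(x, y) = (alt_tail d (k + 1), alt_head d k)"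
      using p 2 assms(2) Ori_asym by (auto simp: doubleton_eq_iff)
    then show ?thesis using other_in_alt_arc[OF assms(1)] by metis
  qed
qed

lemma alt_vertex_add_2_ne: assumes "d \<in> Ori" shows "alt_vertex d (p + 2) \<noteq> alt_vertex d p"
  using alt_vertex_eq_iff[OF assms] mod_add_2_neq_int[of "2 * int (alt_period d)" p] alt_period_ge_2[OF assms]
  by simp

text \<open>An alternating walk is determined by its first arc: at each vertex the next arc is the
  other_in or other_out partner of the previous one.\<close>
lemma alternating_walk_eq_alt_vertex:
  fixes X :: "nat \<Rightarrow> 'a"
  assumes d: "(X 0, X 1) \<in> Ori" and ne: "\<And>p. X (p + 2) \<noteq> X p"
    and alt: "\<And>p. ((X p, X (p + 1)) \<in> Ori \<and> (X (p + 2), X (p + 1)) \<in> Ori) \<or>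
      ((X (p + 1), X p) \<in> Ori \<and> (X (p + 1), X (p + 2)) \<in> Ori)"
  shows "X p = alt_vertex (X 0, X 1) (int p)"
proof -
  let ?F = "alt_vertex (X 0, X 1)"
  have "X p = ?F (int p) \<and> X (p + 1) = ?F (int p + 1)"
  proof (induction p)
    case 0 then show ?case using alt_vertex_even[of _ 0] alt_vertex_odd[of _ 0] by simp
  next
    case (Suc p)
    let ?a = "?F (int p)" and ?b = "?F (int p + 1)" and ?c = "?F (int p + 2)"
    have IH: "X p = ?a" "X (p + 1) = ?b" using Suc by auto
    have step: "((?a, ?b) \<in> Ori \<and> (X (p + 2), ?b) \<in> Ori) \<or> ((?b, ?a) \<in> Ori \<and> (?b, X (p + 2)) \<in> Ori)"
      using alt[of p] IH by simp
    have "X (p + 2) = ?c"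
    proof (cases "even (int p)")
      case True
      with alt_vertex_oriented(1)[OF d] have ab: "(?a, ?b) \<in> Ori" and cb: "(?c, ?b) \<in> Ori" by simp_all
      then have "(X (p + 2), ?b) \<in> Ori" using step Ori_asym by blast
      then have "(X (p + 2), ?b) = other_in (?a, ?b)"
        using other_in_cases[OF ab, of "(X (p + 2), ?b)"] ne[of p] IH by auto
      moreover have "(?c, ?b) = other_in (?a, ?b)"
        using other_in_cases[OF ab cb] alt_vertex_add_2_ne[OF d, of "int p"] by auto
      ultimately show ?thesis by (metis prod.inject)
    next
      case False
      with alt_vertex_oriented(2)[OF d] have ba: "(?b, ?a) \<in> Ori" and bc: "(?b, ?c) \<in> Ori" by simp_all
      then have "(?b, X (p + 2)) \<in> Ori" using step Ori_asym by blast
      then have "(?b, X (p + 2)) = other_out (?b, ?a)"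
        using other_out_cases[OF ba, of "(?b, X (p + 2))"] ne[of p] IH by auto
      moreover have "(?b, ?c) = other_out (?b, ?a)"
        using other_out_cases[OF ba bc] alt_vertex_add_2_ne[OF d, of "int p"] by auto
      ultimately show ?thesis by (metis prod.inject)
    qed
    then show ?case using IH by (simp add: add.commute)
  qed
  then show ?thesis by simp
qed

definition out_cycle :: "'a \<Rightarrow> 'a set set" where
  "out_cycle v = alt_cycle (v, SOME y. (v, y) \<in> Ori)"

definition in_cycle :: "'a \<Rightarrow> 'a set set" where
  "in_cycle v = alt_cycle (SOME x. (x, v) \<in> Ori, v)"

lemma out_cycle_eq: assumes "(v, y) \<in> Ori" shows "out_cycle v = alt_cycle (v, y)"
proof -
  have some: "(v, SOME y. (v, y) \<in> Ori) \<in> Ori" using assms by (rule someI)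
  have "(v, y) = (v, SOME y. (v, y) \<in> Ori) \<or> (v, y) = other_out (v, SOME y. (v, y) \<in> Ori)"
    by (rule other_out_cases[OF some assms]) simp
  then show ?thesis
    by (metis alt_cycle_other_out[OF some] out_cycle_def)
qed

lemma in_cycle_eq: assumes "(x, v) \<in> Ori" shows "in_cycle v = alt_cycle (x, v)"
proof -
  have some: "(SOME x. (x, v) \<in> Ori, v) \<in> Ori" using assms by (rule someI)
  have "(x, v) = (SOME x. (x, v) \<in> Ori, v) \<or> (x, v) = other_in (SOME x. (x, v) \<in> Ori, v)"
    by (rule other_in_cases[OF some assms]) simp
  then show ?thesis
    by (metis alt_cycle_other_in[OF some] in_cycle_def)
qed

lemma ex_out_arc: assumes "v \<in> V" shows "\<exists>y. (v, y) \<in> Ori"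
proof -
  have "out_nbrs v \<noteq> {}" using card_out_nbrs[OF assms] by auto
  then show ?thesis by (auto simp: out_nbrs_def)
qed

lemma ex_in_arc: assumes "v \<in> V" shows "\<exists>x. (x, v) \<in> Ori"
proof -
  have "in_nbrs v \<noteq> {}" using card_in_nbrs[OF assms] by auto
  then show ?thesis by (auto simp: in_nbrs_def)
qed

lemma out_cycle_alt_tail: "d \<in> Ori \<Longrightarrow> out_cycle (alt_tail d k) = alt_cycle d"
  using out_cycle_eq alt_arc_mem alt_arc_eq alt_cycle_alt_arc by metis

lemma in_cycle_alt_head: "d \<in> Ori \<Longrightarrow> in_cycle (alt_head d k) = alt_cycle d"
  using in_cycle_eq alt_arc_mem alt_arc_eq alt_cycle_alt_arc by metis

lemma mem_out_cycle: "v \<in> V \<Longrightarrow> v \<in> cycle_vertices (out_cycle v)"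
  using ex_out_arc out_cycle_eq alt_tail_mem_alt_cycle[of "(v, _)" 0] by fastforce

lemma mem_in_cycle: "v \<in> V \<Longrightarrow> v \<in> cycle_vertices (in_cycle v)"
  using ex_in_arc in_cycle_eq alt_head_mem_alt_cycle[of "(_, v)" 0] by fastforce

lemma out_cycle_mem: "v \<in> V \<Longrightarrow> out_cycle v \<in> alt_cycles G V E"
  using ex_out_arc out_cycle_eq alt_cycle_mem by metis

lemma in_cycle_mem: "v \<in> V \<Longrightarrow> in_cycle v \<in> alt_cycles G V E"
  using ex_in_arc in_cycle_eq alt_cycle_mem by metis

lemma alt_cycle_eq_in_or_out_cycle:
  assumes "d \<in> Ori" "x \<in> cycle_vertices (alt_cycle d)"
  shows "alt_cycle d = in_cycle x \<or> alt_cycle d = out_cycle x"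
  using assms(2) by (cases rule: mem_alt_cycle_cases) (metis in_cycle_alt_head out_cycle_alt_tail assms(1))+

lemma out_cycle_map: assumes "g \<in> G" "v \<in> V" shows "out_cycle (g v) = cyc_act g (out_cycle v)"
proof -
  obtain y where y: "(v, y) \<in> Ori" using ex_out_arc assms(2) by blast
  then have "(g v, g y) \<in> Ori" using Ori_closed[OF assms(1)] by fastforce
  then show ?thesis using out_cycle_eq y cyc_act_alt_cycle[OF assms(1) y] by simp
qed

lemma in_cycle_map: assumes "g \<in> G" "v \<in> V" shows "in_cycle (g v) = cyc_act g (in_cycle v)"
proof -
  obtain x where x: "(x, v) \<in> Ori" using ex_in_arc assms(2) by blast
  then have "(g x, g v) \<in> Ori" using Ori_closed[OF assms(1)] by fastforce
  then show ?thesis using in_cycle_eq x cyc_act_alt_cycle[OF assms(1) x] by simp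
qed

text \<open>The in-cycle of v meets v at a head, while along the out-cycle v is a tail.\<close>
lemma in_cycle_ne_out_cycle: assumes "v \<in> V" shows "in_cycle v \<noteq> out_cycle v"
proof
  assume same: "in_cycle v = out_cycle v"
  obtain x y where x: "(x, v) \<in> Ori" and y: "(v, y) \<in> Ori" using ex_in_arc ex_out_arc assms by blast
  have "{x, v} \<in> alt_cycle (x, v)"
    using alt_vertex_even[of "(x, v)" 0] alt_vertex_odd[of "(x, v)" 0]
    by (auto simp: alt_cycle_def int_cycle_edges_def intro!: exI[of _ 0])
  then have "{x, v} \<in> alt_cycle (v, y)" using same in_cycle_eq[OF x] out_cycle_eq[OF y] by simp
  then obtain k where "(x, v) = alt_arc (v, y) k \<or> (x, v) = other_in (alt_arc (v, y) k)"
    using oriented_edge_in_alt_cycle[OF y x] by blast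
  then have "v = alt_head (v, y) k" by (metis alt_head_def snd_conv snd_other_in)
  then show False using alt_tail_ne_alt_head[OF y, of 0 k] by simp
qed

end

section \<open>Radius and attachment number\<close>

locale half_arc_transitive_graph_radius = half_arc_transitive_graph +
  fixes r :: nat
  assumes radius: "has_radius G V E r"
begin

lemma alt_period_eq_radius: "d \<in> Ori \<Longrightarrow> alt_period d = r"
  using card_alt_cycle alt_cycle_mem radius by (fastforce simp: has_radius_def)

lemma alt_cycles_cases:
  assumes "C \<in> alt_cycles G V E"
  obtains d where "d \<in> Ori" "C = alt_cycle d"
proof -
  obtain xs where xs: "C = cycle_edges xs" "is_cycle V E xs" "alternating Ori xs"
    using assms unfolding alt_cycles_def Ori_def[symmetric] by blast
  define n where "n = length xs"
  have "card (cycle_edges xs) = 2 * r" using radius assms xs(1) by (simp add: has_radius_def)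
  moreover have "card (cycle_edges xs) = n"
    unfolding n_def using xs(2) by (intro card_cycle_edges) (simp_all add: is_cycle_def)
  ultimately have n: "n = 2 * r" by simp
  define X where "X p = xs ! (p mod n)" for p
  have n_pos: "0 < n" using xs(2) n_def by (auto simp: is_cycle_def)
  have altX: "((X p, X (p + 1)) \<in> Ori \<and> (X (p + 2), X (p + 1)) \<in> Ori) \<or>
      ((X (p + 1), X p) \<in> Ori \<and> (X (p + 1), X (p + 2)) \<in> Ori)" for p
  proof -
    have "(p mod n + 1) mod n = (p + 1) mod n" "(p mod n + 2) mod n = (p + 2) mod n"
      by (simp_all only: mod_add_left_eq)
    then show ?thesis
      using xs(3) n_pos unfolding alternating_def Let_def X_def n_def[symmetric]
      by (metis mod_less_divisor)
  qed
  define q :: nat where "q = (if (X 0, X 1) \<in> Ori then 0 else 1)"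
  define d where "d = (X q, X (q + 1))"
  have d: "d \<in> Ori" using altX[of 0] by (auto simp: d_def q_def numeral_2_eq_2)
  have n_gt_2: "2 < n" using alt_period_ge_2[OF d] alt_period_eq_radius[OF d] n by simp
  have walk_ne: "X (q + (p + 2)) \<noteq> X (q + p)" for p
    using xs(2) n_pos mod_add_2_neq_nat[OF n_gt_2, of "q + p"]
    by (simp add: X_def is_cycle_def n_def nth_eq_iff_index_eq add.assoc)
  have walk_alt: "((X (q + p), X (q + (p + 1))) \<in> Ori \<and> (X (q + (p + 2)), X (q + (p + 1))) \<in> Ori) \<or>
      ((X (q + (p + 1)), X (q + p)) \<in> Ori \<and> (X (q + (p + 1)), X (q + (p + 2))) \<in> Ori)" for p
    using altX[of "q + p"] by (simp add: add.assoc)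
  have X_eq: "X (q + p) = alt_vertex d (int p)" for p
    using alternating_walk_eq_alt_vertex[of "\<lambda>p. X (q + p)", OF _ walk_ne walk_alt] d by (simp add: d_def)
  have "alt_vertex d p = xs ! nat ((p + int q) mod int (length xs))" for p
  proof -
    have "2 * int (alt_period d) = int n" using alt_period_eq_radius[OF d] n by simp
    then have "alt_vertex d p = alt_vertex d (int (nat (p mod int n)))"
      using alt_vertex_mod[OF d, of p] n_pos by simp
    also have "\<dots> = X (q + nat (p mod int n))" using X_eq by simp
    also have "\<dots> = xs ! nat ((p + int q) mod int n)"
      using n_pos by (simp add: X_def nat_mod_as_int mod_add_right_eq add.commute)
    finally show ?thesis using n_def by simp
  qed
  then have "C = alt_cycle d"
    using xs(1) n_pos n_def cycle_edges_eq_int_cycle_edges[of xs "alt_vertex d"] by (simp add: alt_cycle_def)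
  then show ?thesis using that d by blast
qed

end

locale half_arc_transitive_graph_rad3_att2 = half_arc_transitive_graph_radius V E G 3
  for V :: "'a set" and E :: "'a \<Rightarrow> 'a \<Rightarrow> bool" and G :: "('a \<Rightarrow> 'a) set" +
  assumes attachment: "has_attachment G V E 2"
begin

lemma alt_tail_eq_iff_mod_3: "d \<in> Ori \<Longrightarrow> alt_tail d i = alt_tail d j \<longleftrightarrow> i mod 3 = j mod 3"
  using alt_tail_eq_iff alt_period_eq_radius by simp

lemma alt_head_eq_iff_mod_3: "d \<in> Ori \<Longrightarrow> alt_head d i = alt_head d j \<longleftrightarrow> i mod 3 = j mod 3"
  using alt_head_eq_iff alt_period_eq_radius by simp

lemma common_vertices_alt_cycles:
  assumes "C \<in> alt_cycles G V E" "D \<in> alt_cycles G V E" "C \<noteq> D"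
    and "a \<in> cycle_vertices C \<inter> cycle_vertices D"
  obtains b where "b \<noteq> a" "cycle_vertices C \<inter> cycle_vertices D = {a, b}"
proof -
  have "card (cycle_vertices C \<inter> cycle_vertices D) = 2"
    using attachment assms unfolding has_attachment_def by blast
  then obtain x y where xy: "cycle_vertices C \<inter> cycle_vertices D = {x, y}" "x \<noteq> y"
    by (auto simp: card_2_iff)
  moreover have "a = x \<or> a = y" using assms(4) xy by auto
  ultimately show ?thesis using that by (metis insert_commute)
qed

lemma in_cycle_alt_tail_eq_shift:
  assumes "d \<in> Ori" "in_cycle (alt_tail d i) = in_cycle (alt_tail d j)"
  shows "in_cycle (alt_tail d (i + t)) = in_cycle (alt_tail d (j + t))"
proof -
  obtain g where "g \<in> G" "\<And>k. g (alt_tail d k) = alt_tail d (k + t)"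
    using alt_rotation[OF assms(1)] by metis
  then show ?thesis using in_cycle_map alt_tail_mem_V[OF assms(1)] assms(2) by metis
qed

lemma in_out_cycle_eq_shift:
  assumes "d \<in> Ori" "in_cycle (alt_tail d k) = out_cycle (alt_head d j)"
  shows "in_cycle (alt_tail d (k + t)) = out_cycle (alt_head d (j + t))"
proof -
  obtain g where "g \<in> G" "\<And>k. g (alt_tail d k) = alt_tail d (k + t)" "\<And>k. g (alt_head d k) = alt_head d (k + t)"
    using alt_rotation[OF assms(1)] by metis
  then show ?thesis
    using in_cycle_map out_cycle_map alt_tail_mem_V[OF assms(1)] alt_head_mem_V[OF assms(1)] assms(2) by metis
qed

lemma in_out_cycle_eq_reflect:
  assumes "d \<in> Ori" "in_cycle (alt_tail d k) = out_cycle (alt_head d j)"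
  shows "in_cycle (alt_tail d (1 - k)) = out_cycle (alt_head d (- j))"
proof -
  obtain g where "g \<in> G" "\<And>k. g (alt_tail d k) = alt_tail d (1 - k)" "\<And>k. g (alt_head d k) = alt_head d (- k)"
    using alt_reflection[OF assms(1)] by metis
  then show ?thesis
    using in_cycle_map out_cycle_map alt_tail_mem_V[OF assms(1)] alt_head_mem_V[OF assms(1)] assms(2) by metis
qed

text \<open>If u_0 and u_1 shared their in-cycle, rotation would put u_2 on it as well; but that cycle
  differs from the cycle of d, and two alternating cycles meet in only two vertices.\<close>
lemma in_cycle_alt_tail_0_ne_1:
  assumes "d \<in> Ori" shows "in_cycle (alt_tail d 0) \<noteq> in_cycle (alt_tail d 1)"
proof
  let ?u = "alt_tail d" and ?C = "in_cycle (alt_tail d 0)"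
  have u_V: "?u k \<in> V" for k using alt_tail_mem_V[OF assms] .
  assume eq: "?C = in_cycle (?u 1)"
  then have "in_cycle (?u 1) = in_cycle (?u 2)" using in_cycle_alt_tail_eq_shift[OF assms eq, of 1] by simp
  then have in_C: "?u 0 \<in> cycle_vertices ?C" "?u 1 \<in> cycle_vertices ?C" "?u 2 \<in> cycle_vertices ?C"
    using mem_in_cycle[OF u_V] eq by metis+
  have in_D: "?u k \<in> cycle_vertices (alt_cycle d)" for k by (rule alt_tail_mem_alt_cycle)
  have "?C \<noteq> alt_cycle d" using in_cycle_ne_out_cycle[OF u_V] out_cycle_alt_tail[OF assms] by metis
  then obtain b where "cycle_vertices ?C \<inter> cycle_vertices (alt_cycle d) = {?u 0, b}"
    using common_vertices_alt_cycles[OF in_cycle_mem[OF u_V] alt_cycle_mem[OF assms]] in_C(1) in_D by blast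
  then have "?u 1 \<in> {?u 0, b}" "?u 2 \<in> {?u 0, b}" using in_C in_D by blast+
  moreover have "?u 1 \<noteq> ?u 0" "?u 2 \<noteq> ?u 0" "?u 1 \<noteq> ?u 2"
    using alt_tail_eq_iff_mod_3[OF assms] by (simp_all del: alt_tail_0)
  ultimately show False by auto
qed

lemma in_cycle_alt_tail_eq_iff:
  assumes "d \<in> Ori"
  shows "in_cycle (alt_tail d i) = in_cycle (alt_tail d j) \<longleftrightarrow> i mod 3 = j mod 3"
proof
  let ?u = "alt_tail d" and ?C = "in_cycle (alt_tail d 0)"
  note ne_01 = in_cycle_alt_tail_0_ne_1[OF assms]
  have ne_02: "?C \<noteq> in_cycle (?u 2)"
  proof
    assume "?C = in_cycle (?u 2)"
    then have "in_cycle (?u 1) = in_cycle (?u 3)" using in_cycle_alt_tail_eq_shift[OF assms, of 0 2 1] by simp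
    then show False using ne_01 alt_tail_eq_iff_mod_3[OF assms, of 3 0] by simp
  qed
  assume "in_cycle (?u i) = in_cycle (?u j)"
  moreover have "?u (j - i) = ?u ((j - i) mod 3)" using alt_tail_eq_iff_mod_3[OF assms] by simp
  ultimately have C: "?C = in_cycle (?u ((j - i) mod 3))"
    using in_cycle_alt_tail_eq_shift[OF assms, of i j "- i"] by simp
  have "0 \<le> (j - i) mod 3" "(j - i) mod 3 < 3" by simp_all
  then consider "(j - i) mod 3 = 0" | "(j - i) mod 3 = 1" | "(j - i) mod 3 = 2" by linarith
  then have "(j - i) mod 3 = 0" using C ne_01 ne_02 by cases simp_all
  then show "i mod 3 = j mod 3" by presburger
qed (use alt_tail_eq_iff_mod_3[OF assms] in metis)

lemma in_cycle_alt_tail_ne_out_cycle: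
  assumes "d \<in> Ori" "(j - k) mod 3 \<noteq> 1"
  shows "in_cycle (alt_tail d k) \<noteq> out_cycle (alt_head d j)"
proof
  have ne_0: "in_cycle (alt_tail d 0) \<noteq> out_cycle (alt_head d 0)"
  proof
    assume "in_cycle (alt_tail d 0) = out_cycle (alt_head d 0)"
    then have "in_cycle (alt_tail d 1) = in_cycle (alt_tail d 0)" using in_out_cycle_eq_reflect[OF assms(1)] by fastforce
    then show False using in_cycle_alt_tail_eq_iff[OF assms(1), of 1 0] by simp
  qed
  assume "in_cycle (alt_tail d k) = out_cycle (alt_head d j)"
  moreover have "alt_head d (j - k) = alt_head d ((j - k) mod 3)" using alt_head_eq_iff_mod_3[OF assms(1)] by simp
  ultimately have eq: "in_cycle (alt_tail d 0) = out_cycle (alt_head d ((j - k) mod 3))"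
    using in_out_cycle_eq_shift[OF assms(1), of k j "- k"] by (simp del: alt_tail_0)
  consider "(j - k) mod 3 = 0" | "(j - k) mod 3 = 2" using assms(2) by linarith
  then show False
  proof cases
    case 1 then show False using eq ne_0 by simp
  next
    case 2
    then have "in_cycle (alt_tail d 0) = out_cycle (alt_head d (- 1))"
      using eq alt_head_eq_iff_mod_3[OF assms(1), of 2 "- 1"] by simp
    then have "in_cycle (alt_tail d 1) = out_cycle (alt_head d 1)" using in_out_cycle_eq_reflect[OF assms(1)] by fastforce
    then show False using in_out_cycle_eq_shift[OF assms(1), of 1 1 "- 1"] ne_0 by simp
  qed
qed

text \<open>The in-cycle of u_0 meets the cycle of d in a second vertex, which by the two previous
  lemmas can only be w_1.\<close>
lemma in_cycle_alt_tail_eq_out_cycle: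
  assumes "d \<in> Ori" shows "in_cycle (alt_tail d k) = out_cycle (alt_head d (k + 1))"
proof -
  let ?C = "in_cycle (alt_tail d 0)"
  have u_V: "alt_tail d 0 \<in> V" using alt_tail_mem_V[OF assms] .
  have C_ne: "?C \<noteq> alt_cycle d" using in_cycle_ne_out_cycle[OF u_V] out_cycle_alt_tail[OF assms] by metis
  obtain x where x: "(x, alt_tail d 0) \<in> Ori" using ex_in_arc[OF u_V] by blast
  have C: "?C = alt_cycle (x, alt_tail d 0)" using in_cycle_eq[OF x] .
  obtain z where z: "z \<noteq> alt_tail d 0" "z \<in> cycle_vertices ?C" "z \<in> cycle_vertices (alt_cycle d)"
    using common_vertices_alt_cycles[OF in_cycle_mem[OF u_V] alt_cycle_mem[OF assms] C_ne]
      mem_in_cycle[OF u_V] alt_tail_mem_alt_cycle by (metis Int_iff insertI1 insertI2)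
  have C_z: "?C = in_cycle z \<or> ?C = out_cycle z"
    using alt_cycle_eq_in_or_out_cycle[OF x] C z(2) by simp
  from z(3) have "?C = out_cycle (alt_head d 1)"
  proof (cases rule: mem_alt_cycle_cases)
    case (1 k)
    then have "?C = in_cycle (alt_tail d k)" using C_z C_ne out_cycle_alt_tail[OF assms] by metis
    then have "alt_tail d k = alt_tail d 0"
      using in_cycle_alt_tail_eq_iff[OF assms, of 0 k] alt_tail_eq_iff_mod_3[OF assms] by metis
    then show ?thesis using 1 z(1) by simp
  next
    case (2 k)
    then have "?C = out_cycle (alt_head d k)" using C_z C_ne in_cycle_alt_head[OF assms] by metis
    then have "k mod 3 = 1" using in_cycle_alt_tail_ne_out_cycle[OF assms, of k 0] by auto
    then show ?thesis using \<open>?C = out_cycle (alt_head d k)\<close> alt_head_eq_iff_mod_3[OF assms, of k 1] by simp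
  qed
  then show ?thesis using in_out_cycle_eq_shift[OF assms, of 0 1 k] by (simp add: add.commute)
qed

lemma Ori_iff_cycles:
  assumes "x \<in> V" "y \<in> V"
  shows "(x, y) \<in> Ori \<longleftrightarrow> in_cycle y = out_cycle x \<and> in_cycle x \<noteq> out_cycle y"
proof
  assume xy: "(x, y) \<in> Ori"
  then have "in_cycle x \<noteq> out_cycle y"
    using in_cycle_alt_tail_ne_out_cycle[OF xy, of 0 0] by simp
  then show "in_cycle y = out_cycle x \<and> in_cycle x \<noteq> out_cycle y"
    using in_cycle_eq[OF xy] out_cycle_eq[OF xy] by simp
next
  assume cycles: "in_cycle y = out_cycle x \<and> in_cycle x \<noteq> out_cycle y"
  obtain y0 where d: "(x, y0) \<in> Ori" using ex_out_arc[OF assms(1)] by blast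
  let ?d = "(x, y0)"
  have "y \<in> cycle_vertices (alt_cycle ?d)" using mem_in_cycle[OF assms(2)] cycles out_cycle_eq[OF d] by simp
  then show "(x, y) \<in> Ori"
  proof (cases rule: mem_alt_cycle_cases)
    case (1 k)
    then show ?thesis using cycles out_cycle_eq[OF d] out_cycle_alt_tail[OF d] in_cycle_ne_out_cycle[OF assms(2)]
      by metis
  next
    case (2 k)
    then have "k mod 3 \<noteq> 1"
      using cycles in_cycle_alt_tail_eq_out_cycle[OF d, of 0] alt_head_eq_iff_mod_3[OF d, of k 1] by auto
    moreover have "0 \<le> k mod 3" "k mod 3 < 3" by simp_all
    ultimately consider "k mod 3 = 0" | "k mod 3 = 2" by linarith
    then show ?thesis
    proof cases
      case 1
      then have "y = y0" using 2 alt_head_eq_iff_mod_3[OF d, of k 0] by simp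
      then show ?thesis using d by simp
    next
      case 2
      then have "(x, y) = other_in (alt_arc ?d (- 1))"
        using \<open>y = alt_head ?d k\<close> alt_head_eq_iff_mod_3[OF d, of k "- 1"] other_in_alt_arc[OF d, of "- 1"] by simp
      then show ?thesis using other_in_mem alt_arc_mem[OF d] by metis
    qed
  qed
qed

definition cycle_pair :: "'a \<Rightarrow> 'a set set \<times> 'a set set" where
  "cycle_pair v = (in_cycle v, out_cycle v)"

lemma cycle_pair_mem_arcs: assumes "v \<in> V" shows "cycle_pair v \<in> graph_arcs (alt_adj G V E)"
proof -
  have "v \<in> cycle_vertices (in_cycle v) \<inter> cycle_vertices (out_cycle v)"
    using mem_in_cycle[OF assms] mem_out_cycle[OF assms] by blast
  then show ?thesis using in_cycle_mem[OF assms] out_cycle_mem[OF assms] in_cycle_ne_out_cycle[OF assms]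
    by (auto simp: cycle_pair_def graph_arcs_def alt_adj_def)
qed

lemma inj_on_cycle_pair: "inj_on cycle_pair V"
proof (rule inj_onI)
  fix x y assume xy: "x \<in> V" "y \<in> V" "cycle_pair x = cycle_pair y"
  obtain y0 where d: "(x, y0) \<in> Ori" using ex_out_arc[OF xy(1)] by blast
  have same: "in_cycle x = in_cycle y" "out_cycle x = out_cycle y" using xy(3) by (simp_all add: cycle_pair_def)
  have "y \<in> cycle_vertices (alt_cycle (x, y0))" using mem_out_cycle[OF xy(2)] same out_cycle_eq[OF d] by simp
  then show "x = y"
  proof (cases rule: mem_alt_cycle_cases)
    case (1 k)
    then have "in_cycle (alt_tail (x, y0) 0) = in_cycle (alt_tail (x, y0) k)" using same by simp
    then show ?thesis
      using 1 in_cycle_alt_tail_eq_iff[OF d, of 0 k] alt_tail_eq_iff_mod_3[OF d, of 0 k] by simp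
  next
    case (2 k)
    then show ?thesis
      using same in_cycle_alt_head[OF d] out_cycle_eq[OF d] in_cycle_ne_out_cycle[OF xy(2)] by metis
  qed
qed

lemma cycle_pair_surj:
  assumes "X \<in> graph_arcs (alt_adj G V E)" shows "\<exists>v\<in>V. cycle_pair v = X"
proof -
  obtain C D where X: "X = (C, D)" "C \<in> alt_cycles G V E" "D \<in> alt_cycles G V E" "C \<noteq> D"
    and "cycle_vertices C \<inter> cycle_vertices D \<noteq> {}"
    using assms by (auto simp: graph_arcs_def alt_adj_def)
  then obtain x where x: "x \<in> cycle_vertices C" "x \<in> cycle_vertices D" by blast
  obtain d1 where d1: "d1 \<in> Ori" "C = alt_cycle d1" using alt_cycles_cases[OF X(2)] by blast
  obtain d2 where d2: "d2 \<in> Ori" "D = alt_cycle d2" using alt_cycles_cases[OF X(3)] by blast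
  have x_V: "x \<in> V" using x(1) d1 cycle_vertices_alt_cycle_subset by blast
  have C_x: "C = in_cycle x \<or> C = out_cycle x" and D_x: "D = in_cycle x \<or> D = out_cycle x"
    using alt_cycle_eq_in_or_out_cycle d1 d2 x by blast+
  show ?thesis
  proof (cases "C = in_cycle x")
    case True
    then show ?thesis using D_x X(1,4) x_V by (auto simp: cycle_pair_def)
  next
    case False
    then have C: "C = out_cycle x" and D: "D = in_cycle x" using C_x D_x X(4) by auto
    obtain y where e: "(y, x) \<in> Ori" using ex_in_arc[OF x_V] by blast
    let ?v = "alt_tail (y, x) (- 1)"
    have "cycle_pair ?v = X"
      using in_cycle_alt_tail_eq_out_cycle[OF e, of "- 1"] out_cycle_alt_tail[OF e] in_cycle_eq[OF e] C D X(1)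
      by (simp add: cycle_pair_def)
    then show ?thesis using alt_tail_mem_V[OF e] by blast
  qed
qed

lemma bij_betw_cycle_pair: "bij_betw cycle_pair V (graph_arcs (alt_adj G V E))"
  unfolding bij_betw_def using inj_on_cycle_pair cycle_pair_mem_arcs cycle_pair_surj by blast

definition dart_vertex :: "'a set set \<times> 'a set set \<Rightarrow> 'a" where
  "dart_vertex = inv_into V cycle_pair"

lemma bij_betw_dart_vertex: "bij_betw dart_vertex (graph_arcs (alt_adj G V E)) V"
  unfolding dart_vertex_def by (rule bij_betw_inv_into[OF bij_betw_cycle_pair])

lemma dart_vertex:
  assumes "X \<in> graph_arcs (alt_adj G V E)"
  shows dart_vertex_mem: "dart_vertex X \<in> V"
    and in_cycle_dart_vertex: "in_cycle (dart_vertex X) = fst X"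
    and out_cycle_dart_vertex: "out_cycle (dart_vertex X) = snd X"
proof -
  have "X \<in> cycle_pair ` V" using bij_betw_cycle_pair assms by (simp add: bij_betw_def)
  then have "dart_vertex X \<in> V" "cycle_pair (dart_vertex X) = X"
    by (auto simp: dart_vertex_def inv_into_into f_inv_into_f)
  then show "dart_vertex X \<in> V" "in_cycle (dart_vertex X) = fst X" "out_cycle (dart_vertex X) = snd X"
    by (metis cycle_pair_def fst_conv snd_conv)+
qed

lemma Ori_dart_vertex_iff:
  assumes "X \<in> graph_arcs (alt_adj G V E)" "Y \<in> graph_arcs (alt_adj G V E)"
  shows "(dart_vertex X, dart_vertex Y) \<in> Ori \<longleftrightarrow> fst Y = snd X \<and> fst X \<noteq> snd Y"
  using Ori_iff_cycles[OF dart_vertex_mem[OF assms(1)] dart_vertex_mem[OF assms(2)]] dart_vertex assms by simp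

lemma arcs_alt_adj_iff: "X \<in> graph_arcs (alt_adj G V E) \<longleftrightarrow> alt_adj G V E (fst X) (snd X)"
  by (cases X) (simp add: graph_arcs_def)

theorem alt_graph_two_arc_transitive:
  assumes "two_arc (alt_adj G V E) x y z" "two_arc (alt_adj G V E) x' y' z'"
  shows "\<exists>g\<in>G. cyc_act g x = x' \<and> cyc_act g y = y' \<and> cyc_act g z = z'"
proof -
  let ?R = "alt_adj G V E"
  have arcs: "(x, y) \<in> graph_arcs ?R" "(y, z) \<in> graph_arcs ?R" "(x', y') \<in> graph_arcs ?R" "(y', z') \<in> graph_arcs ?R"
    using assms by (auto simp: two_arc_def graph_arcs_def)
  have "(dart_vertex (x, y), dart_vertex (y, z)) \<in> Ori" "(dart_vertex (x', y'), dart_vertex (y', z')) \<in> Ori"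
    using Ori_dart_vertex_iff arcs assms by (auto simp: two_arc_def)
  then obtain g where g: "g \<in> G" "g (dart_vertex (x, y)) = dart_vertex (x', y')" "g (dart_vertex (y, z)) = dart_vertex (y', z')"
    using Ori_transitive by fastforce
  then have "cyc_act g x = x'" "cyc_act g y = y'" "cyc_act g z = z'"
    using in_cycle_map[OF g(1)] out_cycle_map[OF g(1)] dart_vertex[OF arcs(1)] dart_vertex[OF arcs(2)]
      dart_vertex[OF arcs(3)] dart_vertex[OF arcs(4)] by (metis fst_conv snd_conv)+
  then show ?thesis using g(1) by blast
qed

theorem dart_graph_iso:
  "\<exists>\<Psi> Ori. bij_betw \<Psi> (graph_arcs (alt_adj G V E)) V
     \<and> (\<forall>x\<in>graph_arcs (alt_adj G V E). \<forall>y\<in>graph_arcs (alt_adj G V E).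
          dart_adj (alt_adj G V E) x y \<longleftrightarrow> E (\<Psi> x) (\<Psi> y))
     \<and> G_orientation G V E Ori
     \<and> (\<forall>x y. dart_oriented (alt_adj G V E) x y \<longrightarrow> (\<Psi> x, \<Psi> y) \<in> Ori)"
proof (intro exI conjI ballI allI impI)
  show "bij_betw dart_vertex (graph_arcs (alt_adj G V E)) V" by (rule bij_betw_dart_vertex)
  show "G_orientation G V E Ori" by (rule G_orientation_Ori)
  fix X Y
  show "(dart_vertex X, dart_vertex Y) \<in> Ori" if "dart_oriented (alt_adj G V E) X Y"
    using that Ori_dart_vertex_iff[of X Y] by (auto simp: dart_oriented_def arcs_alt_adj_iff)
  assume "X \<in> graph_arcs (alt_adj G V E)" "Y \<in> graph_arcs (alt_adj G V E)"
  then show "dart_adj (alt_adj G V E) X Y \<longleftrightarrow> E (dart_vertex X) (dart_vertex Y)"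
    using Ori_dart_vertex_iff adj_iff_Ori by (auto simp: dart_adj_def arcs_alt_adj_iff)
qed

end

theorem proposition2p3:
  fixes V :: "'a set" and E :: "'a \<Rightarrow> 'a \<Rightarrow> bool" and G :: "('a \<Rightarrow> 'a) set"
  assumes "simple_graph V E" and "connected_graph V E" and "tetravalent V E"
    and "aut_subgroup G V E" and "half_arc_transitive G V E"
    and "has_radius G V E 3" and "has_attachment G V E 2"
  shows "(\<forall>x y z x' y' z'. two_arc (alt_adj G V E) x y z \<and> two_arc (alt_adj G V E) x' y' z' \<longrightarrow>
            (\<exists>g\<in>G. cyc_act g x = x' \<and> cyc_act g y = y' \<and> cyc_act g z = z'))
       \<and> (\<exists>\<Psi> Ori. bij_betw \<Psi> (graph_arcs (alt_adj G V E)) V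
            \<and> (\<forall>x\<in>graph_arcs (alt_adj G V E). \<forall>y\<in>graph_arcs (alt_adj G V E).
                 dart_adj (alt_adj G V E) x y \<longleftrightarrow> E (\<Psi> x) (\<Psi> y))
            \<and> G_orientation G V E Ori
            \<and> (\<forall>x y. dart_oriented (alt_adj G V E) x y \<longrightarrow> (\<Psi> x, \<Psi> y) \<in> Ori))"
proof -
  interpret half_arc_transitive_graph_rad3_att2 V E G
    using assms by unfold_locales
  show ?thesis using alt_graph_two_arc_transitive dart_graph_iso by blast
qed

end
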